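(* Let $d\ge2$, $\varepsilon_0>0$, $\lambda=e^{\varepsilon_0}$. Then $$\sup_{\rho\in\mathfrak M_d:\,W_\rho\ \varepsilon_0\text{-LDP}}\operatorname{tr}\Sigma(\rho)=T^*_d(\lambda).$$ For every $s_*\in\mathcal S^*_{d,\lambda}$ the law $\rho_{s_*,\lambda}$ is $\varepsilon_0$-LDP-feasible and attains this supremum. An exchangeable feasible law attains the supremum if and only if it is a convex combination of the laws $\{\rho_{s,\lambda}:s\in\mathcal S^*_{d,\lambda}\}$; in particular the extreme exchangeable maximizers are exactly the $\rho_{s,\lambda}$ with $s\in\mathcal S^*_{d,\lambda}$. Finally, $$\mathcal S^*_{d,\lambda}\subseteq\Big\{\Big\lfloor\frac{d}{\lambda+1}\Big\rfloor,\Big\lceil\frac{d}{\lambda+1}\Big\rceil\Big\}\cap\{1,\dots,d-1\}.$$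
   Context: Let $H\in\mathbb R^{d\times(d-1)}$ have orthonormal columns spanning $\{u\in\mathbb R^d:\mathbf 1^\top u=0\}$, $\gamma_i:=H^\top e_i$, $\mathcal X_d:=\{x\in\mathbb R^{d-1}:1+\gamma_i^\top x\ge0\ \forall i\}$, and let $x(a):=H^\top(a-\mathbf 1)$ for $a\in\mathcal K_d:=\{a\in\mathbb R^d_+:\sum a_i=d\}$ (an affine bijection onto $\mathcal X_d$). An anchored law is a Borel probability measure $\rho$ on $\mathcal X_d$ with $\int x\,\rho(dx)=0$; $\mathfrak M_d$ is the set of anchored laws; $W_\rho(B\mid i):=\int_B(1+\gamma_i^\top x)\rho(dx)$; $\Sigma(\rho):=\int xx^\top\rho(dx)$. $W_\rho$ is $\varepsilon_0$-LDP if $W_\rho(B\mid j)\le e^{\varepsilon_0}W_\rho(B\mid i)$ for all Borel $B$ and all $i,j$. For a permutation $\pi$ with matrix $\Pi$, $P_\pi:=H^\top\Pi H$; $\rho$ is exchangeable if $(P_\pi)_\#\rho=\rho$ for all $\pi$. For $1\le s\le d-1$: $\beta_s(\lambda):=\frac{d}{d+s(\lambda-1)}$, $\alpha_s(\lambda):=\lambda\beta_s(\lambda)$, $a^{(s)}_\lambda$ the vector with $s$ coordinates $\alpha_s(\lambda)$ followed by $d-s$ coordinates $\beta_s(\lambda)$, and $\rho_{s,\lambda}:=\frac1{d!}\sum_\pi\delta_{P_\pi x(a^{(s)}_\lambda)}$ (the $s$-subset mechanism). $T_{d,\lambda}(s):=\frac{d\,s(d-s)(\lambda-1)^2}{(d+s(\lambda-1))^2}$,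 $T^*_d(\lambda):=\max_{1\le s\le d-1}T_{d,\lambda}(s)$, $\mathcal S^*_{d,\lambda}:=\operatorname{argmax}_{1\le s\le d-1}T_{d,\lambda}(s)$. *)

theory Defs
  imports "HOL-Probability.Probability"
begin

text \<open>Coordinates of R^d are indexed by a finite linearly ordered type 'd (d = CARD('d));
  the reduced space R^(d-1) is indexed by a finite type 'm with CARD('m) + 1 = CARD('d).\<close>

definition ones :: "real^'d" where "ones = (\<chi> i. 1)"

definition gamma :: "real^'m^'d \<Rightarrow> 'd \<Rightarrow> real^'m" where
  "gamma H i = transpose H *v axis i 1"

definition Xd :: "real^'m^'d \<Rightarrow> (real^'m) set" where
  "Xd H = {x. \<forall>i. 1 + gamma H i \<bullet> x \<ge> 0}"

definition xmap :: "real^'m^'d \<Rightarrow> real^'d \<Rightarrow> real^'m" where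
  "xmap H a = transpose H *v (a - ones)"

definition anchored :: "real^'m^'d \<Rightarrow> (real^'m) measure \<Rightarrow> bool" where
  "anchored H \<rho> \<longleftrightarrow> prob_space \<rho> \<and> sets \<rho> = sets borel \<and> emeasure \<rho> (Xd H) = 1
     \<and> integrable \<rho> (\<lambda>x. x) \<and> (\<integral>x. x \<partial>\<rho>) = 0"

definition W :: "real^'m^'d \<Rightarrow> (real^'m) measure \<Rightarrow> (real^'m) set \<Rightarrow> 'd \<Rightarrow> real" where
  "W H \<rho> B i = (LINT x:B|\<rho>. 1 + gamma H i \<bullet> x)"

definition LDP :: "real^'m^'d \<Rightarrow> real \<Rightarrow> (real^'m) measure \<Rightarrow> bool" where
  "LDP H \<epsilon> \<rho> \<longleftrightarrow> (\<forall>B\<in>sets borel. \<forall>i j. W H \<rho> B j \<le> exp \<epsilon> * W H \<rho> B i)"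

definition Sigma_mat :: "(real^'m) measure \<Rightarrow> real^'m^'m" where
  "Sigma_mat \<rho> = (\<chi> k l. \<integral>x. x$k * x$l \<partial>\<rho>)"

definition perm_matrix :: "('d \<Rightarrow> 'd) \<Rightarrow> real^'d^'d" where
  "perm_matrix \<pi> = (\<chi> i j. if i = \<pi> j then 1 else 0)"

definition Pperm :: "real^'m^'d \<Rightarrow> ('d \<Rightarrow> 'd) \<Rightarrow> real^'m^'m" where
  "Pperm H \<pi> = transpose H ** perm_matrix \<pi> ** H"

definition exchangeable :: "real^'m^'d \<Rightarrow> (real^'m) measure \<Rightarrow> bool" where
  "exchangeable H \<rho> \<longleftrightarrow>
     (\<forall>\<pi>. \<pi> permutes (UNIV::'d set) \<longrightarrow> distr \<rho> borel (\<lambda>x. Pperm H \<pi> *v x) = \<rho>)"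

definition beta_s :: "nat \<Rightarrow> nat \<Rightarrow> real \<Rightarrow> real" where
  "beta_s d s lam = real d / (real d + real s * (lam - 1))"

definition alpha_s :: "nat \<Rightarrow> nat \<Rightarrow> real \<Rightarrow> real" where
  "alpha_s d s lam = lam * beta_s d s lam"

definition a_vec :: "nat \<Rightarrow> real \<Rightarrow> real^'d::{finite,linorder}" where
  "a_vec s lam = (\<chi> i. if card {j. j < i} < s then alpha_s CARD('d) s lam else beta_s CARD('d) s lam)"

definition rho_s :: "real^'m^'d::{finite,linorder} \<Rightarrow> nat \<Rightarrow> real \<Rightarrow> (real^'m) measure" where
  "rho_s H s lam = distr (uniform_count_measure {\<pi>. \<pi> permutes (UNIV::'d set)}) borel
      (\<lambda>\<pi>. Pperm H \<pi> *v xmap H (a_vec s lam))"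

definition T :: "nat \<Rightarrow> real \<Rightarrow> nat \<Rightarrow> real" where
  "T d lam s = real d * real s * (real d - real s) * (lam - 1)^2 / (real d + real s * (lam - 1))^2"

definition Tstar :: "nat \<Rightarrow> real \<Rightarrow> real" where
  "Tstar d lam = Max (T d lam ` {1..d-1})"

definition Sstar :: "nat \<Rightarrow> real \<Rightarrow> nat set" where
  "Sstar d lam = {s \<in> {1..d-1}. T d lam s = Tstar d lam}"

definition is_mix :: "(real^'m) measure \<Rightarrow> real \<Rightarrow> (real^'m) measure \<Rightarrow> (real^'m) measure \<Rightarrow> bool" where
  "is_mix \<rho> t \<mu> \<nu> \<longleftrightarrow> (\<forall>A\<in>sets borel. measure \<rho> A = t * measure \<mu> A + (1 - t) * measure \<nu> A)"

definition extreme_point :: "(real^'m) measure set \<Rightarrow> (real^'m) measure \<Rightarrow> bool" where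
  "extreme_point M \<rho> \<longleftrightarrow> \<rho> \<in> M \<and>
     (\<forall>\<mu>\<in>M. \<forall>\<nu>\<in>M. \<forall>t. 0 < t \<and> t < 1 \<and> is_mix \<rho> t \<mu> \<nu> \<longrightarrow> \<mu> = \<rho> \<and> \<nu> = \<rho>)"

end

theory Submission
  imports Defs
begin

(* Write a = 1 + H x for the point of K_d corresponding to x, so that |x|^2 = sum_i (a_i - 1)^2,
   and the eps0-LDP condition says that almost surely a_j <= lambda * a_i for all i, j.
   Dividing a by its smallest coordinate puts it into the cube [1, lambda]^d, on which
   (sum a_i^2) / (sum a_i)^2 is quasi-convex in every coordinate; so it is maximised only at
   vertices, and a vertex with s coordinates equal to lambda gives sum (a_i - 1)^2 = T(s).
   Hence tr Sigma(rho) = E |x|^2 <= T*, with equality iff rho is carried by the permutation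
   orbits of the vectors a^(s), s in S*.  These orbits are finite and pairwise disjoint, so an
   exchangeable law carried by them is the mixture of the uniform laws rho_s on them, weighted
   by the orbit masses; since S* has at most two elements, the extreme points are the rho_s.
   The location of S* comes from the sign of T(s+1) - T(s), which is the sign of
   d^2 - d (2s+1) - (lambda^2 - 1) s (s+1). *)

section \<open>The profile \<open>T\<close>\<close>

lemma T_diff_sign:
  fixes x y :: nat
  assumes "0 < d" "1 < l"
  obtains K where "0 < K" and "T d l y - T d l x = K * (real y - real x)
      * ((real d)\<^sup>2 - real d * (real x + real y) - (l\<^sup>2 - 1) * real x * real y)"
proof -
  define Dx where "Dx = real d + real x * (l - 1)"
  define Dy where "Dy = real d + real y * (l - 1)"
  have pos: "0 < Dx" "0 < Dy"
    using assms by (simp_all add: Dx_def Dy_def add_pos_nonneg)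
  then have "T d l y - T d l x = real d * (l - 1)\<^sup>2
      * (real y * (real d - real y) * Dx\<^sup>2 - real x * (real d - real x) * Dy\<^sup>2) / (Dx\<^sup>2 * Dy\<^sup>2)"
    unfolding T_def Dx_def[symmetric] Dy_def[symmetric]
    by (simp add: diff_frac_eq algebra_simps)
  also have "real y * (real d - real y) * Dx\<^sup>2 - real x * (real d - real x) * Dy\<^sup>2
      = (real y - real x) * real d
        * ((real d)\<^sup>2 - real d * (real x + real y) - (l\<^sup>2 - 1) * real x * real y)"
    by (simp add: Dx_def Dy_def algebra_simps power2_eq_square)
  finally show ?thesis
    using assms pos
    by (intro that[of "(real d)\<^sup>2 * (l - 1)\<^sup>2 / (Dx\<^sup>2 * Dy\<^sup>2)"]) (simp_all add: power2_eq_square)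
qed

lemma T_Suc_greater:
  assumes "1 < l" and "(real s + 1) * (l + 1) \<le> real d"
  shows "T d l s < T d l (Suc s)"
proof -
  define p where "p = (real s + 1) * (l + 1)"
  define Q where "Q = (real d)\<^sup>2 - real d * (real s + real (Suc s)) - (l\<^sup>2 - 1) * real s * real (Suc s)"
  have p: "real s + 1 < p" and dp: "p \<le> real d" using assms by (simp_all add: p_def)
  then have "0 \<le> (real d - p) * (real d + p - (2 * real s + 1))"
    by (intro mult_nonneg_nonneg) linarith+
  moreover have "0 < (real s + 1) * (l + 1) * l" using assms by simp
  moreover have "Q = (real d - p) * (real d + p - (2 * real s + 1)) + (real s + 1) * (l + 1) * l"
    by (simp add: Q_def p_def algebra_simps power2_eq_square)
  ultimately have "0 < Q" by linarith
  have "0 < real d" using p dp of_nat_0_le_iff[of s] by linarith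
  then have "0 < d" by simp
  obtain K where "0 < K" and K: "T d l (Suc s) - T d l s = K * (real (Suc s) - real s) * Q"
    unfolding Q_def by (rule T_diff_sign[OF \<open>0 < d\<close> assms(1)])
  have "0 < K * (real (Suc s) - real s) * Q" using \<open>0 < K\<close> \<open>0 < Q\<close> by simp
  with K show ?thesis by linarith
qed

lemma T_Suc_less:
  assumes "1 < l" "0 < d" "1 \<le> s" and "real d \<le> real s * (l + 1)"
  shows "T d l (Suc s) < T d l s"
proof -
  define p where "p = real s * (l + 1)"
  define Q where "Q = (real d)\<^sup>2 - real d * (real s + real (Suc s)) - (l\<^sup>2 - 1) * real s * real (Suc s)"
  have "1 * 1 < l * l" using assms by (intro mult_strict_mono) auto
  then have "0 < (l\<^sup>2 - 1) * real s * real (Suc s)"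
    using assms by (simp add: power2_eq_square)
  have "0 < real s * l * (l + 1)" using assms by simp
  have "Q < 0"
  proof (cases "2 * real s + 1 \<le> real d + p")
    case True
    have "Q = (real d - p) * (real d + p - (2 * real s + 1)) - real s * l * (l + 1)"
      by (simp add: Q_def p_def algebra_simps power2_eq_square)
    moreover have "(real d - p) * (real d + p - (2 * real s + 1)) \<le> 0"
      using True assms(4) by (intro mult_nonpos_nonneg) (simp_all add: p_def)
    ultimately show ?thesis using \<open>0 < real s * l * (l + 1)\<close> by linarith
  next
    case False
    have "0 \<le> p" using assms by (simp add: p_def)
    then have "real d * (real d - (2 * real s + 1)) \<le> 0"
      using False by (intro mult_nonneg_nonpos) simp_all
    moreover have "Q = real d * (real d - (2 * real s + 1)) - (l\<^sup>2 - 1) * real s * real (Suc s)"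
      by (simp add: Q_def algebra_simps power2_eq_square)
    ultimately show ?thesis using \<open>0 < (l\<^sup>2 - 1) * real s * real (Suc s)\<close> by linarith
  qed
  obtain K where "0 < K" and K: "T d l (Suc s) - T d l s = K * (real (Suc s) - real s) * Q"
    unfolding Q_def by (rule T_diff_sign[OF assms(2,1)])
  have "K * (real (Suc s) - real s) * Q < 0" using \<open>0 < K\<close> \<open>Q < 0\<close> by (simp add: mult_pos_neg)
  with K show ?thesis by linarith
qed

lemma T_pos:
  assumes "0 < s" "s < d" "1 < l"
  shows "0 < T d l s"
proof -
  have "0 < real d + real s * (l - 1)" using assms by (simp add: add_pos_nonneg)
  then show ?thesis using assms by (simp add: T_def)
qed

lemma T_0 [simp]: "T d l 0 = 0" and T_self [simp]: "T d l d = 0"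
  unfolding T_def by simp_all

lemma T_le_Tstar:
  assumes "s \<le> d" "2 \<le> d" "1 < l"
  shows "T d l s \<le> Tstar d l"
proof -
  have "T d l 1 \<le> Tstar d l"
    using assms unfolding Tstar_def by (intro Max_ge) auto
  moreover have "0 < T d l 1" using assms by (intro T_pos) auto
  ultimately show ?thesis
  proof (cases "s = 0 \<or> s = d")
    case False
    then show ?thesis using assms unfolding Tstar_def by (intro Max_ge) auto
  qed auto
qed

lemma Tstar_pos:
  assumes "2 \<le> d" "1 < l"
  shows "0 < Tstar d l"
  using T_le_Tstar[of 1 d l] T_pos[of 1 d l] assms by simp

lemma Sstar_nonempty:
  assumes "2 \<le> d"
  shows "Sstar d l \<noteq> {}"
proof -
  have "Tstar d l \<in> T d l ` {1..d-1}"
    unfolding Tstar_def using assms by (intro Max_in) auto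
  then show ?thesis unfolding Sstar_def by auto
qed

lemma finite_Sstar: "finite (Sstar d l)"
  unfolding Sstar_def by simp

lemma Sstar_range: "s \<in> Sstar d l \<Longrightarrow> 0 < s \<and> s < d"
  unfolding Sstar_def by auto

lemma Sstar_less_ratio_plus_1:
  assumes "2 \<le> d" "1 < l" "s \<in> Sstar d l"
  shows "real s < real d / (l + 1) + 1"
proof (rule ccontr)
  define q where "q = real d / (l + 1)"
  have qd: "q * (l + 1) = real d" using assms by (simp add: q_def)
  assume "\<not> real s < real d / (l + 1) + 1"
  then have "q \<le> real (s - 1)" using assms(3) by (simp add: q_def of_nat_diff Sstar_def)
  moreover have "0 < q" using assms by (simp add: q_def)
  ultimately have "1 \<le> s - 1" by linarith
  have "q * (l + 1) \<le> real (s - 1) * (l + 1)"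
    using \<open>q \<le> real (s - 1)\<close> assms by (intro mult_right_mono) auto
  then have "T d l (Suc (s - 1)) < T d l (s - 1)"
    using assms \<open>1 \<le> s - 1\<close> qd by (intro T_Suc_less) auto
  moreover have "T d l (s - 1) \<le> T d l s"
    using assms(3) \<open>1 \<le> s - 1\<close> by (auto simp: Sstar_def Tstar_def intro: Max_ge)
  ultimately show False using \<open>1 \<le> s - 1\<close> by simp
qed

lemma Sstar_greater_ratio_minus_1:
  assumes "2 \<le> d" "1 < l" "s \<in> Sstar d l"
  shows "real d / (l + 1) - 1 < real s"
proof (rule ccontr)
  define q where "q = real d / (l + 1)"
  have qd: "q * (l + 1) = real d" using assms by (simp add: q_def)
  assume "\<not> real d / (l + 1) - 1 < real s"
  then have "real s + 1 \<le> q" by (simp add: q_def)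
  then have "(real s + 1) * (l + 1) \<le> q * (l + 1)"
    using assms by (intro mult_right_mono) auto
  then have "T d l s < T d l (Suc s)" using assms qd by (intro T_Suc_greater) auto
  moreover have "q < real d / 2" using assms by (simp add: q_def field_simps)
  then have "T d l (Suc s) \<le> T d l s"
    using assms(3) \<open>real s + 1 \<le> q\<close> by (auto simp: Sstar_def Tstar_def intro: Max_ge)
  ultimately show False by simp
qed

lemma Sstar_subset:
  assumes "2 \<le> d" and "1 < l"
  shows "Sstar d l \<subseteq> {nat \<lfloor>real d / (l + 1)\<rfloor>, nat \<lceil>real d / (l + 1)\<rceil>} \<inter> {1..d - 1}"
proof
  fix s assume s: "s \<in> Sstar d l"
  have "s = nat \<lfloor>real d / (l + 1)\<rfloor> \<or> s = nat \<lceil>real d / (l + 1)\<rceil>"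
  proof (cases "real s \<le> real d / (l + 1)")
    case True
    then have "\<lfloor>real d / (l + 1)\<rfloor> = int s"
      using Sstar_greater_ratio_minus_1[OF assms s] by (simp add: floor_eq_iff)
    then show ?thesis by simp
  next
    case False
    then have "\<lceil>real d / (l + 1)\<rceil> = int s"
      using Sstar_less_ratio_plus_1[OF assms s] by (simp add: ceiling_eq_iff)
    then show ?thesis by simp
  qed
  then show "s \<in> {nat \<lfloor>real d / (l + 1)\<rfloor>, nat \<lceil>real d / (l + 1)\<rceil>} \<inter> {1..d - 1}"
    using s by (auto simp: Sstar_def)
qed

section \<open>Maximising the squared deviation under the ratio constraint\<close>

definition sq_ratio :: "real \<Rightarrow> real \<Rightarrow> real \<Rightarrow> real" where
  "sq_ratio A B x = (A + x\<^sup>2) / (B + x)\<^sup>2"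

lemma sq_ratio_less:
  fixes A B x y :: real
  assumes "0 < B + x" "0 < B + y"
    and "0 < (y - x) * ((B + y) * (B * x - A) + (B + x) * (B * y - A))"
  shows "sq_ratio A B x < sq_ratio A B y"
proof -
  have "(A + y\<^sup>2) * (B + x)\<^sup>2 - (A + x\<^sup>2) * (B + y)\<^sup>2
      = (y - x) * ((B + y) * (B * x - A) + (B + x) * (B * y - A))"
    by (simp add: algebra_simps power2_eq_square)
  then show ?thesis
    using assms by (simp add: sq_ratio_def divide_simps)
qed

text \<open>\<open>sq_ratio A B\<close> decreases up to \<open>A / B\<close> and increases afterwards.\<close>
lemma sq_ratio_less_max_endpoints:
  fixes A B x l :: real
  assumes "0 < B" "1 < x" "x < l"
  shows "sq_ratio A B x < max (sq_ratio A B 1) (sq_ratio A B l)"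
proof (cases "A \<le> B * x")
  case True
  have "B * x < B * l" using assms by simp
  then have "0 < B * l - A" using True by linarith
  then have "0 < (B + x) * (B * l - A)" using assms by simp
  moreover have "0 \<le> (B + l) * (B * x - A)" using assms True by simp
  ultimately have "0 < (B + l) * (B * x - A) + (B + x) * (B * l - A)" by simp
  then have "0 < (l - x) * ((B + l) * (B * x - A) + (B + x) * (B * l - A))"
    using assms by simp
  then show ?thesis
    using assms sq_ratio_less[of B x l A] by simp
next
  case False
  have "B * 1 < B * x" using assms by simp
  then have "B * 1 - A < 0" using False by linarith
  then have "(B + x) * (B * 1 - A) < 0" using assms by (simp add: mult_pos_neg)
  moreover have "(B + 1) * (B * x - A) < 0" using assms False by (simp add: mult_pos_neg)
  ultimately have "(B + 1) * (B * x - A) + (B + x) * (B * 1 - A) < 0" by simp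
  then have "0 < (1 - x) * ((B + 1) * (B * x - A) + (B + x) * (B * 1 - A))"
    using assms by (intro mult_neg_neg) auto
  then show ?thesis
    using assms sq_ratio_less[of B x 1 A] by simp
qed

definition sumsq_ratio :: "('i::finite \<Rightarrow> real) \<Rightarrow> real" where
  "sumsq_ratio u = (\<Sum>i\<in>UNIV. (u i)\<^sup>2) / (\<Sum>i\<in>UNIV. u i)\<^sup>2"

lemma sumsq_ratio_fun_upd:
  "sumsq_ratio (u(j := x)) = sq_ratio (\<Sum>i\<in>-{j}. (u i)\<^sup>2) (\<Sum>i\<in>-{j}. u i) x"
proof -
  have "(\<Sum>i\<in>UNIV. f ((u(j := x)) i)) = f x + (\<Sum>i\<in>-{j}. f (u i))" for f :: "real \<Rightarrow> real"
    by (simp add: sum.remove[of UNIV j] Compl_eq_Diff_UNIV)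
  from this[of "\<lambda>t. t\<^sup>2"] this[of "\<lambda>t. t"] show ?thesis
    by (simp add: sumsq_ratio_def sq_ratio_def add.commute)
qed

lemma sumsq_ratio_scale:
  assumes "c \<noteq> 0"
  shows "sumsq_ratio (\<lambda>i. c * u i) = sumsq_ratio u"
  using assms
  by (simp add: sumsq_ratio_def power_mult_distrib sum_distrib_left[symmetric])

lemma sum_UNIV_if:
  fixes x y :: real
  shows "(\<Sum>i\<in>(UNIV::'i::finite set). if P i then x else y)
    = real (card {i. P i}) * x + (real CARD('i) - real (card {i. P i})) * y"
proof -
  have "card (- {i. P i}) = CARD('i) - card {i. P i}"
    by (simp add: Compl_eq_Diff_UNIV card_Diff_subset)
  moreover have "card {i. P i} \<le> CARD('i)" by (rule card_mono) auto
  ultimately show ?thesis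
    by (simp add: sum.If_cases Compl_eq)
qed

lemma sum_pos_imp_ex_pos:
  fixes f :: "'a \<Rightarrow> real"
  assumes "0 < sum f A"
  obtains a where "a \<in> A" "0 < f a"
  using assms sum_nonpos[of A f] by (meson not_less)

definition vertex_ratio :: "nat \<Rightarrow> real \<Rightarrow> nat \<Rightarrow> real" where
  "vertex_ratio d l s = (real d + (l\<^sup>2 - 1) * real s) / (real d + (l - 1) * real s)\<^sup>2"

lemma sumsq_ratio_vertex:
  fixes u :: "'i::finite \<Rightarrow> real"
  assumes "\<forall>i. u i = 1 \<or> u i = l"
  shows "sumsq_ratio u = vertex_ratio CARD('i) l (card {i. u i = l})"
proof -
  let ?s = "real (card {i. u i = l})"
  have "u = (\<lambda>i. if u i = l then l else 1)" using assms by fastforce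
  then have sums: "(\<Sum>i\<in>UNIV. f (u i)) = ?s * f l + (real CARD('i) - ?s) * f 1"
    for f :: "real \<Rightarrow> real"
    by (subst sum_UNIV_if[symmetric]) (metis (mono_tags, lifting))
  have "(\<Sum>i\<in>UNIV. (u i)\<^sup>2) = real CARD('i) + (l\<^sup>2 - 1) * ?s"
    using sums[of "\<lambda>t. t\<^sup>2"] by (simp add: algebra_simps)
  moreover have "(\<Sum>i\<in>UNIV. u i) = real CARD('i) + (l - 1) * ?s"
    using sums[of "\<lambda>t. t"] by (simp add: algebra_simps)
  ultimately show ?thesis
    by (simp add: sumsq_ratio_def vertex_ratio_def)
qed

lemma vertex_ratio_eq_T:
  assumes "0 < d" "1 < l"
  shows "(real d)\<^sup>2 * vertex_ratio d l s - real d = T d l s"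
proof -
  have "0 < real d + (l - 1) * real s" using assms by (simp add: add_pos_nonneg)
  then show ?thesis
    by (simp add: vertex_ratio_def T_def field_simps) (simp add: algebra_simps power2_eq_square)
qed

lemma sum_compl_singleton_pos:
  fixes u :: "'i::finite \<Rightarrow> real"
  assumes "2 \<le> CARD('i)" "\<forall>i. 0 < u i"
  shows "0 < (\<Sum>i\<in>-{j}. u i)"
proof (rule sum_pos)
  show "-{j} \<noteq> {}"
  proof
    assume "-{j} = {}"
    then have "(UNIV :: 'i set) = {j}" by auto
    then have "CARD('i) = card {j}" by (rule arg_cong)
    with assms(1) show False by simp
  qed
qed (use assms(2) in simp_all)

text \<open>Induction on the set \<open>J\<close> of coordinates that may lie strictly between \<open>1\<close> and \<open>l\<close>:
  moving one such coordinate to the better endpoint strictly increases the ratio.\<close>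
lemma sumsq_ratio_less_vertex:
  fixes u :: "'i::finite \<Rightarrow> real"
  assumes "finite J" "1 < l" "2 \<le> CARD('i)"
    and "\<forall>i. 1 \<le> u i \<and> u i \<le> l" "\<forall>i. i \<notin> J \<longrightarrow> u i = 1 \<or> u i = l"
    and "\<exists>i. u i \<noteq> 1 \<and> u i \<noteq> l"
  shows "\<exists>s \<le> CARD('i). sumsq_ratio u < vertex_ratio CARD('i) l s"
  using assms(1,4-6)
proof (induction J arbitrary: u rule: finite_induct)
  case empty
  then show ?case by auto
next
  case (insert j J)
  have le: "\<exists>s \<le> CARD('i). sumsq_ratio v \<le> vertex_ratio CARD('i) l s"
    if "\<forall>i. 1 \<le> v i \<and> v i \<le> l" "\<forall>i. i \<notin> J \<longrightarrow> v i = 1 \<or> v i = l" for v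
  proof (cases "\<forall>i. v i = 1 \<or> v i = l")
    case True
    moreover have "card {i. v i = l} \<le> CARD('i)" by (rule card_mono) auto
    ultimately show ?thesis using sumsq_ratio_vertex[of v l] by auto
  next
    case False
    then show ?thesis using insert.IH[OF that] by (auto intro: less_imp_le)
  qed
  show ?case
  proof (cases "u j = 1 \<or> u j = l")
    case True
    then show ?thesis using insert by (metis insert_iff)
  next
    case False
    have B: "0 < (\<Sum>i\<in>-{j}. u i)"
      using insert.prems(1) assms(3)
      by (intro sum_compl_singleton_pos) (auto intro: less_le_trans[OF zero_less_one])
    have "1 < u j" "u j < l" using False insert.prems(1)[rule_format, of j] by auto
    then have "sumsq_ratio (u(j := u j)) < max (sumsq_ratio (u(j := 1))) (sumsq_ratio (u(j := l)))"
      unfolding sumsq_ratio_fun_upd by (rule sq_ratio_less_max_endpoints[OF B])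
    moreover have "\<exists>s \<le> CARD('i). sumsq_ratio (u(j := x)) \<le> vertex_ratio CARD('i) l s"
      if "x = 1 \<or> x = l" for x
      by (rule le) (use insert.prems(1,2) that assms(2) in auto)
    ultimately show ?thesis
      by (metis fun_upd_triv less_max_iff_disj order.strict_trans2)
  qed
qed

lemma sum_sq_dev_eq_sumsq_ratio:
  fixes a :: "'i::finite \<Rightarrow> real"
  assumes "(\<Sum>i\<in>UNIV. a i) = real CARD('i)"
  shows "(\<Sum>i\<in>UNIV. (a i - 1)\<^sup>2) = (real CARD('i))\<^sup>2 * sumsq_ratio a - real CARD('i)"
proof -
  have "(\<Sum>i\<in>UNIV. (a i - 1)\<^sup>2) = (\<Sum>i\<in>UNIV. (a i)\<^sup>2) - 2 * (\<Sum>i\<in>UNIV. a i) + real CARD('i)"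
    by (simp add: power2_diff sum.distrib sum_subtractf sum_distrib_left)
  then show ?thesis
    using assms by (simp add: sumsq_ratio_def)
qed

lemma ratio_bounded_min:
  fixes a :: "'i::finite \<Rightarrow> real"
  assumes "0 < (\<Sum>i\<in>UNIV. a i)" "\<forall>i. 0 \<le> a i" "\<forall>i j. a j \<le> l * a i"
  obtains m where "0 < m" "\<forall>i. m \<le> a i \<and> a i \<le> l * m"
proof
  define m where "m = Min (range a)"
  have "m \<in> range a" unfolding m_def by (rule Min_in) auto
  then obtain i0 where "m = a i0" by auto
  moreover obtain j0 where "0 < a j0"
    using assms(1) by (metis not_less sum_nonpos)
  moreover have "a j0 \<le> l * m" using assms(3) \<open>m = a i0\<close> by simp
  ultimately have "m \<noteq> 0" by auto
  then show "0 < m" using assms(2) \<open>m = a i0\<close> by (metis order_le_less)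
  have "\<forall>i. m \<le> a i" unfolding m_def by (auto intro: Min_le)
  then show "\<forall>i. m \<le> a i \<and> a i \<le> l * m" using assms(3) \<open>m = a i0\<close> by simp
qed

lemma sum_sq_dev_cases:
  fixes a :: "'i::finite \<Rightarrow> real"
  assumes l: "1 < l" and d: "2 \<le> CARD('i)" and sum: "(\<Sum>i\<in>UNIV. a i) = real CARD('i)"
    and nonneg: "\<forall>i. 0 \<le> a i" and ratio: "\<forall>i j. a j \<le> l * a i"
  obtains (vertex) m where "0 < m" "\<forall>i. a i = m \<or> a i = l * m"
      "(\<Sum>i\<in>UNIV. (a i - 1)\<^sup>2) = T CARD('i) l (card {i. a i = l * m})"
    | (interior) s where "s \<le> CARD('i)" "(\<Sum>i\<in>UNIV. (a i - 1)\<^sup>2) < T CARD('i) l s"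
proof -
  let ?d = "CARD('i)"
  have "0 < (\<Sum>i\<in>UNIV. a i)" using sum by simp
  then obtain m where "0 < m" and m: "\<forall>i. m \<le> a i \<and> a i \<le> l * m"
    using ratio_bounded_min nonneg ratio by blast
  define u where "u i = a i / m" for i
  have a_u: "a = (\<lambda>i. m * u i)" using \<open>0 < m\<close> by (simp add: u_def fun_eq_iff)
  have box: "\<forall>i. 1 \<le> u i \<and> u i \<le> l" using m \<open>0 < m\<close> by (simp add: u_def field_simps)
  have "sumsq_ratio a = sumsq_ratio u"
    unfolding a_u using \<open>0 < m\<close> by (rule sumsq_ratio_scale[OF less_imp_neq[symmetric]])
  then have dev: "(\<Sum>i\<in>UNIV. (a i - 1)\<^sup>2) = (real ?d)\<^sup>2 * sumsq_ratio u - real ?d"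
    using sum_sq_dev_eq_sumsq_ratio[OF sum] by simp
  have d0: "0 < ?d" using d by simp
  show ?thesis
  proof (cases "\<forall>i. u i = 1 \<or> u i = l")
    case True
    have "\<forall>i. a i = m \<or> a i = l * m" using True unfolding a_u by auto
    moreover have "{i. a i = l * m} = {i. u i = l}" using \<open>0 < m\<close> unfolding a_u by auto
    moreover have "(\<Sum>i\<in>UNIV. (a i - 1)\<^sup>2) = T ?d l (card {i. u i = l})"
      using dev sumsq_ratio_vertex[OF True] vertex_ratio_eq_T[OF d0 l] by simp
    ultimately show ?thesis using \<open>0 < m\<close> by (intro vertex[of m]) simp_all
  next
    case False
    then obtain s where "s \<le> ?d" "sumsq_ratio u < vertex_ratio ?d l s"
      using sumsq_ratio_less_vertex[of UNIV l u] l d box by auto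
    then have "(real ?d)\<^sup>2 * sumsq_ratio u < (real ?d)\<^sup>2 * vertex_ratio ?d l s" by simp
    then have "(\<Sum>i\<in>UNIV. (a i - 1)\<^sup>2) < T ?d l s"
      using dev vertex_ratio_eq_T[OF d0 l, of s] by linarith
    with \<open>s \<le> ?d\<close> show ?thesis by (rule interior)
  qed
qed

lemma sum_sq_dev_le_Tstar:
  fixes a :: "'i::finite \<Rightarrow> real"
  assumes "1 < l" "2 \<le> CARD('i)" "(\<Sum>i\<in>UNIV. a i) = real CARD('i)"
    and "\<forall>i. 0 \<le> a i" "\<forall>i j. a j \<le> l * a i"
  shows "(\<Sum>i\<in>UNIV. (a i - 1)\<^sup>2) \<le> Tstar CARD('i) l"
  using assms
proof (cases rule: sum_sq_dev_cases)
  case (vertex m)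
  have "card {i. a i = l * m} \<le> CARD('i)" by (rule card_mono) auto
  then show ?thesis using vertex T_le_Tstar assms(1,2) by simp
next
  case (interior s)
  then show ?thesis using T_le_Tstar[of s "CARD('i)" l] assms(1,2) by simp
qed

lemma sum_sq_dev_eq_Tstar:
  fixes a :: "'i::finite \<Rightarrow> real"
  assumes "1 < l" "2 \<le> CARD('i)" "(\<Sum>i\<in>UNIV. a i) = real CARD('i)"
    and "\<forall>i. 0 \<le> a i" "\<forall>i j. a j \<le> l * a i"
    and eq: "(\<Sum>i\<in>UNIV. (a i - 1)\<^sup>2) = Tstar CARD('i) l"
  shows "\<exists>s\<in>Sstar CARD('i) l. (\<forall>i. a i = alpha_s CARD('i) s l \<or> a i = beta_s CARD('i) s l)
    \<and> card {i. a i = alpha_s CARD('i) s l} = s"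
  using assms(1-5)
proof (cases rule: sum_sq_dev_cases)
  case (vertex m)
  let ?d = "CARD('i)"
  define s where "s = card {i. a i = l * m}"
  have "s \<le> ?d" unfolding s_def by (rule card_mono) auto
  have Ts: "T ?d l s = Tstar ?d l" using vertex eq by (simp add: s_def)
  moreover have "0 < Tstar ?d l" using Tstar_pos assms(1,2) by simp
  ultimately have "s \<noteq> 0" "s \<noteq> ?d" by (metis T_0 less_irrefl, metis T_self less_irrefl)
  then have "s \<in> Sstar ?d l" using \<open>s \<le> ?d\<close> Ts by (simp add: Sstar_def)
  have "(\<Sum>i\<in>UNIV. a i) = (\<Sum>i\<in>UNIV. if a i = l * m then l * m else m)"
    by (rule sum.cong) (use vertex(2) in auto)
  then have "(\<Sum>i\<in>UNIV. a i) = real s * (l * m) + (real ?d - real s) * m"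
    unfolding s_def sum_UNIV_if .
  then have "m * (real ?d + real s * (l - 1)) = real ?d"
    using assms(3) by (simp add: algebra_simps)
  moreover have "0 < real ?d + real s * (l - 1)" using assms(1) by (simp add: add_pos_nonneg)
  ultimately have beta: "beta_s ?d s l = m" by (simp add: beta_s_def field_simps)
  then have alpha: "alpha_s ?d s l = l * m" by (simp add: alpha_s_def)
  have "(\<forall>i. a i = alpha_s ?d s l \<or> a i = beta_s ?d s l) \<and> card {i. a i = alpha_s ?d s l} = s"
    unfolding alpha beta using vertex(2) s_def by blast
  with \<open>s \<in> Sstar ?d l\<close> show ?thesis by blast
next
  case (interior s)
  then show ?thesis using T_le_Tstar[of s "CARD('i)" l] assms(1,2) eq by simp
qed

definition index_rank :: "'a::{finite,linorder} \<Rightarrow> nat" where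
  "index_rank i = card {j. j < i}"

lemma index_rank_strict_mono: "i < i' \<Longrightarrow> index_rank i < index_rank i'"
  unfolding index_rank_def by (intro psubset_card_mono) auto

lemma inj_index_rank: "inj index_rank"
  by (metis injI less_irrefl linorder_neqE index_rank_strict_mono)

lemma range_index_rank: "range (index_rank :: 'a::{finite,linorder} \<Rightarrow> nat) = {..<CARD('a)}"
proof (rule card_subset_eq)
  show "range (index_rank :: 'a \<Rightarrow> nat) \<subseteq> {..<CARD('a)}"
    unfolding index_rank_def by (auto intro!: psubset_card_mono)
  show "card (range (index_rank :: 'a \<Rightarrow> nat)) = card {..<CARD('a)}"
    using card_image[OF inj_index_rank] by simp
qed simp

lemma card_index_rank_less:
  assumes "s \<le> CARD('a::{finite,linorder})"
  shows "card {i::'a. index_rank i < s} = s"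
proof -
  have "card (index_rank -` {..<s} :: 'a set) = card {..<s}"
    using assms range_index_rank by (intro card_vimage_inj[OF inj_index_rank]) auto
  then show ?thesis by (simp add: vimage_def)
qed

lemma a_vec_nth:
  "a_vec s lam $ i = (if index_rank i < s then alpha_s CARD('d) s lam else beta_s CARD('d) s lam)"
  for i :: "'d::{finite,linorder}"
  unfolding a_vec_def index_rank_def by simp

lemma beta_s_pos: "0 < d \<Longrightarrow> 1 < lam \<Longrightarrow> 0 < beta_s d s lam"
  unfolding beta_s_def by (simp add: add_pos_nonneg)

lemma beta_s_inj:
  assumes "0 < d" "1 < lam" "beta_s d s lam = beta_s d r lam"
  shows "s = r"
proof -
  have "0 < real d + real s * (lam - 1)" "0 < real d + real r * (lam - 1)"
    using assms by (simp_all add: add_pos_nonneg)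
  then have "real s * (lam - 1) = real r * (lam - 1)"
    using assms by (simp add: beta_s_def field_simps)
  then show ?thesis using assms by simp
qed

lemma a_vec_ge_beta:
  fixes i :: "'d::{finite,linorder}"
  assumes "1 < lam"
  shows "beta_s CARD('d) s lam \<le> a_vec s lam $ i"
  using beta_s_pos[of "CARD('d)" lam s] assms by (simp add: a_vec_nth alpha_s_def)

lemma a_vec_ratio:
  fixes i j :: "'d::{finite,linorder}"
  assumes "1 < lam"
  shows "a_vec s lam $ j \<le> lam * a_vec s lam $ i"
proof -
  have b: "0 < beta_s CARD('d) s lam" using assms by (simp add: beta_s_pos)
  then have "beta_s CARD('d) s lam \<le> (lam * lam) * beta_s CARD('d) s lam"
    using assms by (simp add: less_1_mult less_imp_le)
  then show ?thesis using assms b by (simp add: a_vec_nth alpha_s_def)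
qed

lemma a_vec_sum:
  fixes lam :: real
  assumes "s \<le> CARD('d)" "1 < lam"
  shows "(\<Sum>i\<in>UNIV. (a_vec s lam :: real^'d::{finite,linorder}) $ i) = real CARD('d)"
    and "(\<Sum>i\<in>UNIV. ((a_vec s lam :: real^'d::{finite,linorder}) $ i - 1)\<^sup>2) = T CARD('d) lam s"
proof -
  let ?d = "CARD('d)"
  define D where "D = real ?d + real s * (lam - 1)"
  have "0 < D" using assms by (simp add: D_def add_pos_nonneg)
  have sums: "(\<Sum>i\<in>UNIV. f ((a_vec s lam :: real^'d::{finite,linorder}) $ i))
      = real s * f (lam * real ?d / D) + (real ?d - real s) * f (real ?d / D)" for f
    using sum_UNIV_if[of "\<lambda>i::'d::{finite,linorder}. index_rank i < s"] card_index_rank_less[OF assms(1)]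
    by (simp add: a_vec_nth alpha_s_def beta_s_def D_def[symmetric] if_distrib[of f] cong: if_cong)
  have "real s * (lam * real ?d) + (real ?d - real s) * real ?d = real ?d * D"
    by (simp add: D_def algebra_simps)
  then show "(\<Sum>i\<in>UNIV. (a_vec s lam :: real^'d::{finite,linorder}) $ i) = real ?d"
    using sums[of "\<lambda>t. t"] \<open>0 < D\<close> by (simp add: field_simps)
  have e1: "lam * real ?d / D - 1 = (real ?d - real s) * (lam - 1) / D"
    using \<open>0 < D\<close> by (simp add: field_simps) (simp add: D_def algebra_simps)
  have e2: "real ?d / D - 1 = - (real s * (lam - 1)) / D"
    using \<open>0 < D\<close> by (simp add: field_simps) (simp add: D_def algebra_simps)
  have "(\<Sum>i\<in>UNIV. ((a_vec s lam :: real^'d::{finite,linorder}) $ i - 1)\<^sup>2)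
      = (real s * ((real ?d - real s) * (lam - 1))\<^sup>2 + (real ?d - real s) * (real s * (lam - 1))\<^sup>2) / D\<^sup>2"
    unfolding sums[of "\<lambda>t. (t - 1)\<^sup>2"] e1 e2 by (simp add: power_divide add_divide_distrib)
  also have "\<dots> = T ?d lam s"
    unfolding T_def D_def[symmetric] by (simp add: algebra_simps power2_eq_square)
  finally show "(\<Sum>i\<in>UNIV. ((a_vec s lam :: real^'d::{finite,linorder}) $ i - 1)\<^sup>2) = T ?d lam s" .
qed

lemma a_vec_eq_beta:
  assumes "s < CARD('d)"
  obtains i :: "'d::{finite,linorder}" where "a_vec s lam $ i = beta_s CARD('d) s lam"
proof -
  obtain i :: 'd where "index_rank i = s" using range_index_rank assms by (metis lessThan_iff rangeE)
  then show ?thesis by (intro that[of i]) (simp add: a_vec_nth)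
qed

section \<open>Permutations and finite uniform laws\<close>

lemma sum_inv_permutes:
  fixes f :: "'a::finite \<Rightarrow> 'b::comm_monoid_add"
  assumes "\<pi> permutes UNIV"
  shows "(\<Sum>i\<in>UNIV. f (inv \<pi> i)) = (\<Sum>i\<in>UNIV. f i)"
  using sum.permute[OF permutes_inv[OF assms], of f] by (simp add: comp_def)

lemma sum_permutations_apply:
  fixes g :: "'a::finite \<Rightarrow> real"
  shows "real CARD('a) * (\<Sum>\<pi>\<in>{\<pi>. \<pi> permutes UNIV}. g (\<pi> i))
    = real (card {\<pi>. \<pi> permutes (UNIV::'a set)}) * (\<Sum>k\<in>UNIV. g k)"
proof -
  have perm_inv: "(\<Sum>k\<in>UNIV. g (\<pi> k)) = (\<Sum>k\<in>UNIV. g k)" if "\<pi> permutes UNIV" for \<pi>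
    using sum.permute[OF that, of g] by (simp add: comp_def)
  have indep: "(\<Sum>\<pi>\<in>{\<pi>. \<pi> permutes UNIV}. g (\<pi> k)) = (\<Sum>\<pi>\<in>{\<pi>. \<pi> permutes UNIV}. g (\<pi> i))" for k
    using sum_permutations_compose_right[OF permutes_swap_id[of i UNIV k], of "\<lambda>\<pi>. g (\<pi> i)"]
    by simp
  have "(\<Sum>k\<in>UNIV. \<Sum>\<pi>\<in>{\<pi>. \<pi> permutes UNIV}. g (\<pi> k))
      = (\<Sum>k\<in>(UNIV::'a set). \<Sum>\<pi>\<in>{\<pi>. \<pi> permutes UNIV}. g (\<pi> i))"
    by (intro sum.cong refl indep)
  then have "real CARD('a) * (\<Sum>\<pi>\<in>{\<pi>. \<pi> permutes UNIV}. g (\<pi> i))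
      = (\<Sum>k\<in>UNIV. \<Sum>\<pi>\<in>{\<pi>. \<pi> permutes UNIV}. g (\<pi> k))"
    by simp
  also have "\<dots> = (\<Sum>\<pi>\<in>{\<pi>. \<pi> permutes UNIV}. \<Sum>k\<in>UNIV. g (\<pi> k))"
    by (rule sum.swap)
  also have "\<dots> = (\<Sum>\<pi>\<in>{\<pi>. \<pi> permutes (UNIV::'a set)}. \<Sum>k\<in>UNIV. g k)"
    by (rule sum.cong[OF refl]) (simp add: perm_inv)
  finally show ?thesis by simp
qed

lemma permutes_with_image:
  fixes A B :: "'a::finite set"
  assumes "card A = card B"
  obtains \<pi> where "\<pi> permutes UNIV" "\<pi> ` A = B"
proof -
  obtain f where f: "bij_betw f A B" using finite_same_card_bij[of A B] assms by auto
  have "card (- A) = card (- B)"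
    using assms by (simp add: Compl_eq_Diff_UNIV card_Diff_subset)
  then obtain g where g: "bij_betw g (- A) (- B)" using finite_same_card_bij[of "- A" "- B"] by auto
  define \<pi> where "\<pi> i = (if i \<in> A then f i else g i)" for i
  have A: "bij_betw \<pi> A B" using f unfolding \<pi>_def by (rule bij_betw_cong[THEN iffD1, rotated]) simp
  moreover have "bij_betw \<pi> (- A) (- B)" using g unfolding \<pi>_def by (rule bij_betw_cong[THEN iffD1, rotated]) simp
  ultimately have "bij_betw \<pi> (A \<union> - A) (B \<union> - B)" by (rule bij_betw_combine) simp
  then have "\<pi> permutes UNIV" by (intro bij_imp_permutes) simp_all
  moreover have "\<pi> ` A = B" using A by (rule bij_betw_imp_surj_on)
  ultimately show ?thesis by (rule that)
qed

lemma measurable_uniform_count_measure: "f \<in> uniform_count_measure A \<rightarrow>\<^sub>M borel"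
  by (subst measurable_cong_sets[OF sets_uniform_count_measure_count_space refl]) simp

context
  fixes A :: "'a set" and f :: "'a \<Rightarrow> 'b::topological_space"
  assumes A: "finite A" "A \<noteq> {}"
begin

lemma prob_space_distr_uniform: "prob_space (distr (uniform_count_measure A) borel f)"
  using prob_space_uniform_count_measure[OF A] measurable_uniform_count_measure
  by (rule prob_space.prob_space_distr)

lemma integral_distr_uniform:
  fixes g :: "'b \<Rightarrow> 'c::{banach, second_countable_topology}"
  assumes "g \<in> borel_measurable borel"
  shows "(\<integral>x. g x \<partial>distr (uniform_count_measure A) borel f) = (1 / real (card A)) *\<^sub>R (\<Sum>a\<in>A. g (f a))"
  using integral_distr[OF measurable_uniform_count_measure[of f A] assms]
    lebesgue_integral_point_measure_finite[OF A(1), of "\<lambda>_. 1 / real (card A)" "\<lambda>a. g (f a)"]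
  by (simp add: uniform_count_measure_def scaleR_sum_right)

lemma integrable_distr_uniform:
  fixes g :: "'b \<Rightarrow> 'c::{banach, second_countable_topology}"
  assumes "g \<in> borel_measurable borel"
  shows "integrable (distr (uniform_count_measure A) borel f) g"
  using integrable_distr_eq[OF measurable_uniform_count_measure[of f A] assms]
    integrable_point_measure_finite[OF A(1), of "\<lambda>_. 1 / real (card A)" "\<lambda>a. g (f a)"]
  by (simp add: uniform_count_measure_def)

lemma measure_distr_uniform:
  assumes "B \<in> sets borel"
  shows "measure (distr (uniform_count_measure A) borel f) B = (\<Sum>a\<in>A. indicator B (f a)) / real (card A)"
proof -
  have "measure (distr (uniform_count_measure A) borel f) B = measure (uniform_count_measure A) {a\<in>A. f a \<in> B}"
    using measure_distr[OF measurable_uniform_count_measure assms]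
    by (simp add: space_uniform_count_measure vimage_def Int_def conj_commute)
  also have "\<dots> = real (card {a\<in>A. f a \<in> B}) / real (card A)"
    using A by (intro measure_uniform_count_measure) auto
  also have "real (card {a\<in>A. f a \<in> B}) = (\<Sum>a\<in>A. indicator B (f a))"
    using A by (simp add: indicator_def sum.If_cases Int_def)
  finally show ?thesis .
qed

lemma AE_distr_uniform:
  assumes "f ` A \<in> sets borel"
  shows "AE x in distr (uniform_count_measure A) borel f. x \<in> f ` A"
  using assms
  by (subst AE_distr_iff[OF measurable_uniform_count_measure]) (auto simp: space_uniform_count_measure)

end

lemma measure_eqI_prob_space:
  assumes "prob_space M" "prob_space N" "sets M = sets N"
    and "\<And>A. A \<in> sets M \<Longrightarrow> measure M A = measure N A"
  shows "M = N"
proof (rule measure_eqI)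
  fix A assume "A \<in> sets M"
  moreover have "finite_measure M" "finite_measure N"
    using assms(1,2) by (auto intro: prob_space.finite_measure)
  ultimately show "emeasure M A = emeasure N A"
    using assms(3,4) by (simp add: finite_measure.emeasure_eq_measure)
qed fact

lemma borel_measurable_matrix_vector_mult: "(\<lambda>x. A *v x) \<in> borel_measurable borel"
  for A :: "real^'n^'k"
  by (intro borel_measurable_continuous_onI linear_continuous_on
      linear_conv_bounded_linear[THEN iffD1] matrix_vector_mul_linear)

section \<open>The trace of the second-moment matrix\<close>

lemma trace_Sigma_mat_eq_integral:
  fixes \<rho> :: "(real^'m) measure"
  assumes "prob_space \<rho>" "sets \<rho> = sets borel" and bound: "AE x in \<rho>. (norm x)\<^sup>2 \<le> C"
  shows "integrable \<rho> (\<lambda>x. (norm x)\<^sup>2)" and "trace (Sigma_mat \<rho>) = (\<integral>x. (norm x)\<^sup>2 \<partial>\<rho>)"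
proof -
  interpret prob_space \<rho> by fact
  have norm_sq: "(norm x)\<^sup>2 = (\<Sum>k\<in>UNIV. x$k * x$k)" for x :: "real^'m"
    by (simp add: power2_norm_eq_inner inner_vec_def)
  have int: "integrable \<rho> (\<lambda>x. x$k * x$k)" for k
  proof (rule integrable_const_bound[where B = C])
    show "AE x in \<rho>. norm (x$k * x$k) \<le> C"
      using bound
    proof eventually_elim
      case (elim x)
      have "\<bar>x$k\<bar> * \<bar>x$k\<bar> \<le> norm x * norm x"
        using component_le_norm_cart[of x k] by (intro mult_mono) auto
      then show ?case using elim by (simp add: abs_mult power2_eq_square)
    qed
    show "(\<lambda>x. x$k * x$k) \<in> borel_measurable \<rho>"
      by (subst measurable_cong_sets[OF assms(2) refl]) measurable
  qed
  then show "integrable \<rho> (\<lambda>x. (norm x)\<^sup>2)"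
    unfolding norm_sq by (intro Bochner_Integration.integrable_sum)
  have "trace (Sigma_mat \<rho>) = (\<Sum>k\<in>UNIV. \<integral>x. x$k * x$k \<partial>\<rho>)"
    by (simp add: trace_def Sigma_mat_def)
  also have "\<dots> = (\<integral>x. (norm x)\<^sup>2 \<partial>\<rho>)"
    unfolding norm_sq by (rule Bochner_Integration.integral_sum[symmetric]) (rule int)
  finally show "trace (Sigma_mat \<rho>) = (\<integral>x. (norm x)\<^sup>2 \<partial>\<rho>)" .
qed

lemma trace_Sigma_mat_le:
  fixes \<rho> :: "(real^'m) measure"
  assumes "prob_space \<rho>" "sets \<rho> = sets borel" "AE x in \<rho>. (norm x)\<^sup>2 \<le> C"
  shows "trace (Sigma_mat \<rho>) \<le> C"
proof -
  interpret prob_space \<rho> by fact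
  note tr = trace_Sigma_mat_eq_integral[OF assms]
  have "(\<integral>x. (norm x)\<^sup>2 \<partial>\<rho>) \<le> (\<integral>x. C \<partial>\<rho>)"
    using tr(1) assms(3) by (intro integral_mono_AE) auto
  then show ?thesis using tr(2) by (simp add: prob_space)
qed

lemma trace_Sigma_mat_AE_const:
  fixes \<rho> :: "(real^'m) measure"
  assumes "prob_space \<rho>" "sets \<rho> = sets borel" and const: "AE x in \<rho>. (norm x)\<^sup>2 = C"
  shows "trace (Sigma_mat \<rho>) = C"
proof -
  interpret prob_space \<rho> by fact
  have "AE x in \<rho>. (norm x)\<^sup>2 \<le> C" using const by eventually_elim simp
  note tr = trace_Sigma_mat_eq_integral[OF assms(1,2) this]
  have "(\<integral>x. (norm x)\<^sup>2 \<partial>\<rho>) = (\<integral>x. C \<partial>\<rho>)"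
    using tr(1) const by (intro integral_cong_AE) auto
  then show ?thesis using tr(2) by (simp add: prob_space)
qed

lemma AE_norm_sq_eq_if_trace_eq:
  fixes \<rho> :: "(real^'m) measure"
  assumes "prob_space \<rho>" "sets \<rho> = sets borel" and bound: "AE x in \<rho>. (norm x)\<^sup>2 \<le> C"
    and "trace (Sigma_mat \<rho>) = C"
  shows "AE x in \<rho>. (norm x)\<^sup>2 = C"
proof -
  interpret prob_space \<rho> by fact
  note tr = trace_Sigma_mat_eq_integral[OF assms(1-3)]
  have "integrable \<rho> (\<lambda>x. C - (norm x)\<^sup>2)" using tr(1) by simp
  moreover have "(\<integral>x. C - (norm x)\<^sup>2 \<partial>\<rho>) = 0"
    using tr assms(4) by (simp add: Bochner_Integration.integral_diff prob_space)
  ultimately have "AE x in \<rho>. C - (norm x)\<^sup>2 = 0"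
    using integral_nonneg_eq_0_iff_AE bound by (metis (mono_tags, lifting) AE_cong diff_ge_0_iff_ge)
  then show ?thesis by eventually_elim simp
qed

section \<open>Coordinates on the simplex\<close>

lemma closed_Xd: "closed (Xd H)"
  unfolding Xd_def by (intro closed_Collect_all closed_Collect_le continuous_intros)

locale sum_zero_frame =
  fixes H :: "real^'m^'d::{finite,linorder}"
  assumes orth: "transpose H ** H = mat 1"
    and span: "{H *v y | y. True} = {u. (\<Sum>i\<in>UNIV. u$i) = 0}"
begin

definition a_of :: "real^'m \<Rightarrow> real^'d::{finite,linorder}" where
  "a_of x = ones + H *v x"

lemma sum_H_mult: "(\<Sum>i\<in>UNIV. (H *v y)$i) = 0"
  using span by blast

lemma transpose_H_mult_H: "transpose H *v (H *v x) = x"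
  by (simp only: matrix_vector_mul_assoc orth matrix_vector_mul_lid)

lemma H_mult_transpose_H:
  assumes "(\<Sum>i\<in>UNIV. v$i) = 0"
  shows "H *v (transpose H *v v) = v"
proof -
  obtain y where "v = H *v y" using span assms by blast
  then show ?thesis by (simp only: transpose_H_mult_H)
qed

lemma a_of_nth: "a_of x $ i = 1 + gamma H i \<bullet> x"
proof -
  have "gamma H i \<bullet> x = (axis i 1 v* H) \<bullet> x" unfolding gamma_def by simp
  also have "\<dots> = axis i 1 \<bullet> (H *v x)" by (rule dot_lmul_matrix)
  finally show ?thesis by (simp add: a_of_def ones_def inner_axis')
qed

lemma sum_a_of: "(\<Sum>i\<in>UNIV. a_of x $ i) = real CARD('d)"
  using sum_H_mult[of x] by (simp add: a_of_def ones_def sum.distrib)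

lemma a_of_inj: "a_of x = a_of y \<Longrightarrow> x = y"
  unfolding a_of_def by (metis add_left_cancel transpose_H_mult_H)

lemma mem_Xd_iff: "x \<in> Xd H \<longleftrightarrow> (\<forall>i. 0 \<le> a_of x $ i)"
  by (simp add: Xd_def a_of_nth)

lemma norm_sq_eq_sum_sq_dev: "(norm x)\<^sup>2 = (\<Sum>i\<in>UNIV. (a_of x $ i - 1)\<^sup>2)"
proof -
  have "(norm x)\<^sup>2 = x \<bullet> (transpose H *v (H *v x))"
    by (simp only: power2_norm_eq_inner transpose_H_mult_H)
  also have "\<dots> = (H *v x) \<bullet> (H *v x)"
    by (metis dot_lmul_matrix inner_commute transpose_matrix_vector)
  also have "\<dots> = (\<Sum>i\<in>UNIV. (a_of x $ i - 1)\<^sup>2)"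
    by (simp add: inner_vec_def power2_eq_square a_of_def ones_def)
  finally show ?thesis .
qed

lemma a_of_xmap:
  assumes "(\<Sum>i\<in>UNIV. a$i) = real CARD('d)"
  shows "a_of (xmap H a) = a"
proof -
  have "(\<Sum>i\<in>UNIV. (a - ones)$i) = 0" using assms by (simp add: ones_def sum_subtractf)
  then have "H *v (transpose H *v (a - ones)) = a - ones" by (rule H_mult_transpose_H)
  then show ?thesis unfolding a_of_def xmap_def by simp
qed

lemma perm_matrix_mult_nth:
  assumes "\<pi> permutes (UNIV::'d set)"
  shows "(perm_matrix \<pi> *v w) $ i = w $ inv \<pi> i"
proof -
  have "(perm_matrix \<pi> *v w) $ i = (\<Sum>j\<in>UNIV. (if i = \<pi> j then 1 else 0) * w$j)"
    by (simp add: perm_matrix_def matrix_vector_mult_def)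
  also have "\<dots> = (\<Sum>j\<in>UNIV. if j = inv \<pi> i then w$j else 0)"
    using assms by (intro sum.cong) (auto simp: permutes_inverses)
  finally show ?thesis by simp
qed

lemma a_of_Pperm:
  assumes "\<pi> permutes (UNIV::'d set)"
  shows "a_of (Pperm H \<pi> *v x) $ i = a_of x $ inv \<pi> i"
proof -
  have "(\<Sum>i\<in>UNIV. (perm_matrix \<pi> *v (H *v x))$i) = 0"
    using sum_inv_permutes[OF assms, of "\<lambda>i. (H *v x)$i"] sum_H_mult[of x]
    by (simp add: perm_matrix_mult_nth[OF assms])
  moreover have "Pperm H \<pi> *v x = transpose H *v (perm_matrix \<pi> *v (H *v x))"
    unfolding Pperm_def by (simp only: matrix_vector_mul_assoc matrix_mul_assoc)
  ultimately have "H *v (Pperm H \<pi> *v x) = perm_matrix \<pi> *v (H *v x)"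
    by (simp only: H_mult_transpose_H)
  then show ?thesis
    by (simp add: a_of_def ones_def perm_matrix_mult_nth[OF assms])
qed

lemma Pperm_mult_Pperm:
  assumes "\<sigma> permutes (UNIV::'d set)" "\<pi> permutes (UNIV::'d set)"
  shows "Pperm H \<sigma> *v (Pperm H \<pi> *v x) = Pperm H (\<sigma> \<circ> \<pi>) *v x"
proof (rule a_of_inj, rule vec_eq_iff[THEN iffD2], rule allI)
  fix i
  have "inv (\<sigma> \<circ> \<pi>) = inv \<pi> \<circ> inv \<sigma>"
    using assms by (simp add: o_inv_distrib permutes_bij)
  then show "a_of (Pperm H \<sigma> *v (Pperm H \<pi> *v x)) $ i = a_of (Pperm H (\<sigma> \<circ> \<pi>) *v x) $ i"
    using assms by (simp add: a_of_Pperm permutes_compose)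
qed

lemma integrable_a_of_nth:
  assumes "finite_measure M" "integrable M (\<lambda>x. x)"
  shows "integrable M (\<lambda>x. a_of x $ i)"
  unfolding a_of_nth
  by (intro Bochner_Integration.integrable_add finite_measure.integrable_const[OF assms(1)]
      integrable_inner_right assms(2))

lemma integrable_indicator_a_of:
  assumes "anchored H \<rho>" "B \<in> sets borel"
  shows "integrable \<rho> (\<lambda>x. indicator B x * a_of x $ i)"
proof -
  have fin: "finite_measure \<rho>" and int: "integrable \<rho> (\<lambda>x. x)" and B: "B \<in> sets \<rho>"
    using assms by (auto simp: anchored_def prob_space.finite_measure)
  show ?thesis using integrable_mult_indicator[OF B integrable_a_of_nth[OF fin int, of i]] by simp
qed

lemma indicator_a_of_diff_eq:
  "(\<lambda>x. indicator B x * (a_of x $ j - c * a_of x $ i))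
    = (\<lambda>x. indicator B x * a_of x $ j - c * (indicator B x * a_of x $ i))"
  by (simp add: fun_eq_iff right_diff_distrib mult.left_commute)

lemma integrable_indicator_a_of_diff:
  assumes "anchored H \<rho>" "B \<in> sets borel"
  shows "integrable \<rho> (\<lambda>x. indicator B x * (a_of x $ j - c * a_of x $ i))"
  unfolding indicator_a_of_diff_eq
  by (intro Bochner_Integration.integrable_diff integrable_mult_right integrable_indicator_a_of[OF assms])

lemma W_diff_eq_integral:
  assumes "anchored H \<rho>" "B \<in> sets borel"
  shows "W H \<rho> B j - c * W H \<rho> B i = (\<integral>x. indicator B x * (a_of x $ j - c * a_of x $ i) \<partial>\<rho>)"
proof -
  have "W H \<rho> B k = (\<integral>x. indicator B x * a_of x $ k \<partial>\<rho>)" for k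
    by (simp add: W_def set_lebesgue_integral_def a_of_nth)
  then show ?thesis
    unfolding indicator_a_of_diff_eq
    by (simp add: Bochner_Integration.integral_diff integrable_indicator_a_of[OF assms])
qed

lemma AE_ratio_if_LDP:
  assumes anc: "anchored H \<rho>" and ldp: "LDP H \<epsilon> \<rho>"
  shows "AE x in \<rho>. \<forall>i j. a_of x $ j \<le> exp \<epsilon> * a_of x $ i"
proof -
  have "AE x in \<rho>. a_of x $ j \<le> exp \<epsilon> * a_of x $ i" for i j
  proof -
    define B where "B = {x. exp \<epsilon> * a_of x $ i < a_of x $ j}"
    define h where "h x = indicator B x * (a_of x $ j - exp \<epsilon> * a_of x $ i)" for x
    have B: "B \<in> sets borel" unfolding B_def a_of_nth by measurable
    have nonneg: "\<forall>x. 0 \<le> h x" by (simp add: h_def B_def indicator_def)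
    have "W H \<rho> B j \<le> exp \<epsilon> * W H \<rho> B i" using ldp B by (simp add: LDP_def)
    then have "(\<integral>x. h x \<partial>\<rho>) \<le> 0"
      using W_diff_eq_integral[OF anc B, of j "exp \<epsilon>" i] unfolding h_def by linarith
    moreover have "0 \<le> (\<integral>x. h x \<partial>\<rho>)" using nonneg by (simp add: integral_nonneg_AE)
    ultimately have "(\<integral>x. h x \<partial>\<rho>) = 0" by linarith
    moreover have "integrable \<rho> h"
      unfolding h_def by (rule integrable_indicator_a_of_diff[OF anc B])
    ultimately have "AE x in \<rho>. h x = 0"
      using integral_nonneg_eq_0_iff_AE nonneg by blast
    then show ?thesis
    proof eventually_elim
      case (elim x)
      then show ?case by (cases "x \<in> B") (simp_all add: h_def B_def)
    qed
  qed
  then show ?thesis by (simp add: AE_all_countable)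
qed

lemma LDP_if_AE_ratio:
  assumes anc: "anchored H \<rho>" and ae: "AE x in \<rho>. \<forall>i j. a_of x $ j \<le> exp \<epsilon> * a_of x $ i"
  shows "LDP H \<epsilon> \<rho>"
  unfolding LDP_def
proof (intro ballI allI)
  fix B :: "(real^'m) set" and i j assume B: "B \<in> sets borel"
  have "AE x in \<rho>. indicator B x * (a_of x $ j - exp \<epsilon> * a_of x $ i) \<le> 0"
    using ae by eventually_elim (simp add: indicator_def)
  with integrable_indicator_a_of_diff[OF anc B] integrable_zero
  have "(\<integral>x. indicator B x * (a_of x $ j - exp \<epsilon> * a_of x $ i) \<partial>\<rho>) \<le> (\<integral>x. 0 \<partial>\<rho>)"
    by (rule integral_mono_AE)
  then show "W H \<rho> B j \<le> exp \<epsilon> * W H \<rho> B i"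
    using W_diff_eq_integral[OF anc B, of j "exp \<epsilon>" i] by simp
qed

end

section \<open>The subset mechanism\<close>

locale subset_mechanism = sum_zero_frame H for H :: "real^'m^'d::{finite,linorder}" +
  fixes lam :: real
  assumes lam_gt_1: "1 < lam" and card_ge_2: "2 \<le> CARD('d)"
begin

abbreviation perms :: "('d \<Rightarrow> 'd) set" where
  "perms \<equiv> {\<pi>. \<pi> permutes UNIV}"

definition orbit_pt :: "nat \<Rightarrow> ('d \<Rightarrow> 'd) \<Rightarrow> real^'m" where
  "orbit_pt s \<pi> = Pperm H \<pi> *v xmap H (a_vec s lam)"

definition orbit :: "nat \<Rightarrow> (real^'m) set" where
  "orbit s = orbit_pt s ` perms"

lemma finite_perms: "finite perms"
  by (simp add: finite_permutations)

lemma perms_nonempty: "perms \<noteq> {}"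
  using permutes_id by blast

lemma rho_s_eq: "rho_s H s lam = distr (uniform_count_measure perms) borel (orbit_pt s)"
  unfolding rho_s_def orbit_pt_def ..

lemma prob_space_rho_s: "prob_space (rho_s H s lam)"
  unfolding rho_s_eq using finite_perms perms_nonempty by (rule prob_space_distr_uniform)

lemma sets_rho_s [simp]: "sets (rho_s H s lam) = sets borel"
  by (simp add: rho_s_eq)

lemma measure_rho_s:
  "B \<in> sets borel \<Longrightarrow>
    measure (rho_s H s lam) B = (\<Sum>\<pi>\<in>perms. indicator B (orbit_pt s \<pi>)) / real (card perms)"
  unfolding rho_s_eq using finite_perms perms_nonempty by (rule measure_distr_uniform)

lemma a_of_orbit_pt:
  assumes "s \<le> CARD('d)" "\<pi> \<in> perms"
  shows "a_of (orbit_pt s \<pi>) $ i = a_vec s lam $ inv \<pi> i"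
  using assms a_of_Pperm a_of_xmap[OF a_vec_sum(1)[OF assms(1) lam_gt_1]] by (simp add: orbit_pt_def)

lemma norm_orbit_pt:
  assumes "s \<le> CARD('d)" "\<pi> \<in> perms"
  shows "(norm (orbit_pt s \<pi>))\<^sup>2 = T CARD('d) lam s"
proof -
  have "(norm (orbit_pt s \<pi>))\<^sup>2 = (\<Sum>i\<in>UNIV. (a_vec s lam $ inv \<pi> i - 1)\<^sup>2)"
    using assms by (simp add: norm_sq_eq_sum_sq_dev a_of_orbit_pt)
  also have "\<dots> = (\<Sum>i\<in>(UNIV::'d set). (a_vec s lam $ i - 1)\<^sup>2)"
    using assms sum_inv_permutes[where f = "\<lambda>i. (a_vec s lam $ i - 1)\<^sup>2"] by simp
  finally show ?thesis using a_vec_sum(2)[OF assms(1) lam_gt_1] by simp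
qed

lemma orbit_pt_in_orbit: "\<pi> \<in> perms \<Longrightarrow> orbit_pt s \<pi> \<in> orbit s"
  by (simp add: orbit_def)

lemma finite_orbit: "finite (orbit s)"
  using finite_perms by (simp add: orbit_def)

lemma orbit_in_sets: "orbit s \<in> sets borel"
  using finite_orbit by (intro borel_closed finite_imp_closed)

lemma AE_rho_s_orbit: "AE x in rho_s H s lam. x \<in> orbit s"
  unfolding rho_s_eq orbit_def using finite_perms perms_nonempty orbit_in_sets[unfolded orbit_def]
  by (rule AE_distr_uniform)

lemma measure_rho_s_orbit_self: "measure (rho_s H s lam) (orbit s) = 1"
  using prob_space.emeasure_eq_1_AE[OF prob_space_rho_s _ AE_rho_s_orbit] orbit_in_sets
  by (simp add: measure_def)

lemma sum_orbit_pt: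
  assumes "s \<le> CARD('d)"
  shows "(\<Sum>\<pi>\<in>perms. orbit_pt s \<pi>) = 0"
proof (rule a_of_inj, rule vec_eq_iff[THEN iffD2], rule allI)
  fix i
  let ?g = "\<lambda>k::'d. a_vec s lam $ k - 1"
  have "(\<Sum>k\<in>UNIV. ?g k) = 0"
    using a_vec_sum(1)[OF assms lam_gt_1] by (simp add: sum_subtractf)
  then have "(\<Sum>\<pi>\<in>perms. ?g (\<pi> i)) = 0"
    using sum_permutations_apply[of ?g i] by simp
  then have "(\<Sum>\<pi>\<in>perms. ?g (inv \<pi> i)) = 0"
    using sum_permutations_inverse[where f = "\<lambda>\<pi>. ?g (\<pi> i)"] by simp
  have "(H *v (\<Sum>\<pi>\<in>perms. orbit_pt s \<pi>)) $ i = (\<Sum>\<pi>\<in>perms. (H *v orbit_pt s \<pi>) $ i)"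
    by (simp only: vec.sum sum_component)
  also have "\<dots> = (\<Sum>\<pi>\<in>perms. ?g (inv \<pi> i))"
  proof (rule sum.cong[OF refl])
    fix \<pi> assume "\<pi> \<in> perms"
    then have "1 + (H *v orbit_pt s \<pi>) $ i = a_vec s lam $ inv \<pi> i"
      using a_of_orbit_pt[OF assms] by (simp add: a_of_def ones_def)
    then show "(H *v orbit_pt s \<pi>) $ i = ?g (inv \<pi> i)" by simp
  qed
  finally have "(H *v (\<Sum>\<pi>\<in>perms. orbit_pt s \<pi>)) $ i = 0"
    using \<open>(\<Sum>\<pi>\<in>perms. ?g (inv \<pi> i)) = 0\<close> by simp
  then show "a_of (\<Sum>\<pi>\<in>perms. orbit_pt s \<pi>) $ i = a_of 0 $ i"
    by (simp add: a_of_def)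
qed

lemma orbit_subset_Xd:
  assumes "s \<le> CARD('d)"
  shows "orbit s \<subseteq> Xd H"
proof
  fix x assume "x \<in> orbit s"
  then obtain \<pi> where "\<pi> \<in> perms" "x = orbit_pt s \<pi>" by (auto simp: orbit_def)
  then have "a_of x $ i = a_vec s lam $ inv \<pi> i" for i using assms by (simp add: a_of_orbit_pt)
  moreover have "0 < a_vec s lam $ k" for k :: 'd
    using beta_s_pos[of "CARD('d)" lam s] a_vec_ge_beta[OF lam_gt_1, of s k] lam_gt_1 by simp
  ultimately show "x \<in> Xd H" by (simp add: mem_Xd_iff less_imp_le)
qed

lemma anchored_rho_s:
  assumes "s \<le> CARD('d)"
  shows "anchored H (rho_s H s lam)"
  unfolding anchored_def
proof (intro conjI)
  show "prob_space (rho_s H s lam)" by (rule prob_space_rho_s)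
  show "sets (rho_s H s lam) = sets borel" by simp
  have "AE x in rho_s H s lam. x \<in> Xd H"
    using AE_rho_s_orbit[of s] by eventually_elim (use orbit_subset_Xd[OF assms] in blast)
  then show "emeasure (rho_s H s lam) (Xd H) = 1"
    using borel_closed[OF closed_Xd] by (intro prob_space.emeasure_eq_1_AE[OF prob_space_rho_s]) simp_all
  show "integrable (rho_s H s lam) (\<lambda>x. x)"
    unfolding rho_s_eq using finite_perms perms_nonempty by (rule integrable_distr_uniform) simp
  show "(\<integral>x. x \<partial>rho_s H s lam) = 0"
    unfolding rho_s_eq using finite_perms perms_nonempty
    by (subst integral_distr_uniform) (simp_all add: sum_orbit_pt[OF assms])
qed

lemma LDP_rho_s:
  assumes "s \<le> CARD('d)"
  shows "LDP H (ln lam) (rho_s H s lam)"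
proof (rule LDP_if_AE_ratio[OF anchored_rho_s[OF assms]])
  show "AE x in rho_s H s lam. \<forall>i j. a_of x $ j \<le> exp (ln lam) * a_of x $ i"
    using AE_rho_s_orbit
  proof eventually_elim
    case (elim x)
    then obtain \<pi> where "\<pi> \<in> perms" "x = orbit_pt s \<pi>" by (auto simp: orbit_def)
    then show ?case
      using assms lam_gt_1 by (auto simp: a_of_orbit_pt intro: a_vec_ratio)
  qed
qed

lemma trace_rho_s:
  assumes "s \<le> CARD('d)"
  shows "trace (Sigma_mat (rho_s H s lam)) = T CARD('d) lam s"
proof (rule trace_Sigma_mat_AE_const[OF prob_space_rho_s sets_rho_s])
  show "AE x in rho_s H s lam. (norm x)\<^sup>2 = T CARD('d) lam s"
    using AE_rho_s_orbit by eventually_elim (auto simp: orbit_def norm_orbit_pt[OF assms])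
qed

lemma exchangeable_rho_s: "exchangeable H (rho_s H s lam)"
  unfolding exchangeable_def
proof (intro allI impI)
  fix \<sigma> :: "'d \<Rightarrow> 'd" assume \<sigma>: "\<sigma> permutes UNIV"
  have meas: "(\<lambda>x. Pperm H \<sigma> *v x) \<in> rho_s H s lam \<rightarrow>\<^sub>M borel"
    by (subst measurable_cong_sets[OF sets_rho_s refl]) (rule borel_measurable_matrix_vector_mult)
  show "distr (rho_s H s lam) borel (\<lambda>x. Pperm H \<sigma> *v x) = rho_s H s lam"
  proof (rule measure_eqI_prob_space)
    show "prob_space (distr (rho_s H s lam) borel (\<lambda>x. Pperm H \<sigma> *v x))"
      using prob_space_rho_s meas by (rule prob_space.prob_space_distr)
    fix A assume "A \<in> sets (distr (rho_s H s lam) borel (\<lambda>x. Pperm H \<sigma> *v x))"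
    then have A: "A \<in> sets borel" by simp
    then have "(\<lambda>x. Pperm H \<sigma> *v x) -` A \<in> sets borel"
      using borel_measurable_matrix_vector_mult by (auto simp: measurable_def)
    then have "measure (distr (rho_s H s lam) borel (\<lambda>x. Pperm H \<sigma> *v x)) A
        = (\<Sum>\<pi>\<in>perms. indicator ((\<lambda>x. Pperm H \<sigma> *v x) -` A) (orbit_pt s \<pi>)) / real (card perms)"
      using measure_distr[OF meas A] by (simp add: measure_rho_s)
    also have "\<dots> = (\<Sum>\<pi>\<in>perms. indicator A (orbit_pt s (\<sigma> \<circ> \<pi>))) / real (card perms)"
      using \<sigma> by (simp add: orbit_pt_def Pperm_mult_Pperm indicator_def)
    also have "\<dots> = measure (rho_s H s lam) A"
      using setum_permutations_compose_left[OF \<sigma>, of "\<lambda>\<pi>. indicator A (orbit_pt s \<pi>) :: real"] A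
      by (simp add: measure_rho_s)
    finally show "measure (distr (rho_s H s lam) borel (\<lambda>x. Pperm H \<sigma> *v x)) A = measure (rho_s H s lam) A" .
  qed (simp_all add: prob_space_rho_s)
qed

lemma mem_orbit_if_two_valued:
  assumes s: "s \<le> CARD('d)"
    and vals: "\<forall>i. a_of x $ i = alpha_s CARD('d) s lam \<or> a_of x $ i = beta_s CARD('d) s lam"
    and card: "card {i. a_of x $ i = alpha_s CARD('d) s lam} = s"
  shows "x \<in> orbit s"
proof -
  let ?A = "{i::'d. index_rank i < s}" and ?B = "{i. a_of x $ i = alpha_s CARD('d) s lam}"
  obtain \<pi> where \<pi>: "\<pi> permutes UNIV" "\<pi> ` ?A = ?B"
    using permutes_with_image[of ?A ?B] card_index_rank_less[OF s] card by auto
  have "alpha_s CARD('d) s lam \<noteq> beta_s CARD('d) s lam"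
    using beta_s_pos[of "CARD('d)" lam s] lam_gt_1 by (simp add: alpha_s_def)
  moreover have "i \<in> ?B \<longleftrightarrow> inv \<pi> i \<in> ?A" for i
    using inj_image_mem_iff[OF permutes_inj[OF \<pi>(1)], of "inv \<pi> i" ?A] \<pi>
    by (simp add: permutes_inverses(1))
  ultimately have "a_of x $ i = a_of (orbit_pt s \<pi>) $ i" for i
    using vals[rule_format, of i] \<pi>(1) s by (cases "i \<in> ?B") (simp_all add: a_of_orbit_pt a_vec_nth)
  then have "x = orbit_pt s \<pi>" by (intro a_of_inj) (simp add: vec_eq_iff)
  with \<pi>(1) show ?thesis by (simp add: orbit_def)
qed

lemma feasible_AE:
  assumes "anchored H \<rho>" "LDP H (ln lam) \<rho>"
  shows "AE x in \<rho>. (\<forall>i. 0 \<le> a_of x $ i) \<and> (\<forall>i j. a_of x $ j \<le> lam * a_of x $ i)"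
proof -
  have "AE x in \<rho>. x \<in> Xd H"
    using assms(1) prob_space.AE_prob_1[of \<rho> "Xd H"] by (simp add: anchored_def measure_def)
  moreover have "AE x in \<rho>. \<forall>i j. a_of x $ j \<le> lam * a_of x $ i"
    using AE_ratio_if_LDP[OF assms] lam_gt_1 by simp
  ultimately show ?thesis by eventually_elim (simp add: mem_Xd_iff)
qed

lemma norm_sq_le_Tstar:
  assumes "\<forall>i. 0 \<le> a_of x $ i" "\<forall>i j. a_of x $ j \<le> lam * a_of x $ i"
  shows "(norm x)\<^sup>2 \<le> Tstar CARD('d) lam"
  using sum_sq_dev_le_Tstar[OF lam_gt_1 card_ge_2 sum_a_of assms]
  by (simp add: norm_sq_eq_sum_sq_dev)

lemma norm_sq_eq_Tstar_imp_orbit: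
  assumes "\<forall>i. 0 \<le> a_of x $ i" "\<forall>i j. a_of x $ j \<le> lam * a_of x $ i"
    and "(norm x)\<^sup>2 = Tstar CARD('d) lam"
  shows "\<exists>s\<in>Sstar CARD('d) lam. x \<in> orbit s"
proof -
  obtain s where "s \<in> Sstar CARD('d) lam"
    and "\<forall>i. a_of x $ i = alpha_s CARD('d) s lam \<or> a_of x $ i = beta_s CARD('d) s lam"
    and "card {i. a_of x $ i = alpha_s CARD('d) s lam} = s"
    using sum_sq_dev_eq_Tstar[OF lam_gt_1 card_ge_2 sum_a_of assms(1,2)] assms(3)
    by (auto simp: norm_sq_eq_sum_sq_dev)
  moreover have "s \<le> CARD('d)" using Sstar_range[OF \<open>s \<in> Sstar CARD('d) lam\<close>] by simp
  ultimately show ?thesis by (blast intro: mem_orbit_if_two_valued)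
qed

lemma trace_le_Tstar:
  assumes "anchored H \<rho>" "LDP H (ln lam) \<rho>"
  shows "trace (Sigma_mat \<rho>) \<le> Tstar CARD('d) lam"
proof (rule trace_Sigma_mat_le)
  show "AE x in \<rho>. (norm x)\<^sup>2 \<le> Tstar CARD('d) lam"
    using feasible_AE[OF assms] by eventually_elim (simp add: norm_sq_le_Tstar)
qed (use assms(1) in \<open>simp_all add: anchored_def\<close>)

lemma AE_optimal_orbits:
  assumes "anchored H \<rho>" "LDP H (ln lam) \<rho>" "trace (Sigma_mat \<rho>) = Tstar CARD('d) lam"
  shows "AE x in \<rho>. x \<in> (\<Union>s\<in>Sstar CARD('d) lam. orbit s)"
proof -
  have "prob_space \<rho>" "sets \<rho> = sets borel" using assms(1) by (simp_all add: anchored_def)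
  moreover have "AE x in \<rho>. (norm x)\<^sup>2 \<le> Tstar CARD('d) lam"
    using feasible_AE[OF assms(1,2)] by eventually_elim (simp add: norm_sq_le_Tstar)
  ultimately have "AE x in \<rho>. (norm x)\<^sup>2 = Tstar CARD('d) lam"
    using assms(3) by (rule AE_norm_sq_eq_if_trace_eq)
  with feasible_AE[OF assms(1,2)] show ?thesis
    by eventually_elim (use norm_sq_eq_Tstar_imp_orbit in blast)
qed

text \<open>The orbits are told apart by their smallest coordinate \<open>beta_s\<close>, which is injective in \<open>s\<close>.\<close>
lemma orbit_disjoint:
  assumes "s < CARD('d)" "r < CARD('d)" "x \<in> orbit s" "x \<in> orbit r"
  shows "s = r"
proof -
  have min: "\<forall>i. beta_s CARD('d) t lam \<le> a_of x $ i" "\<exists>i. a_of x $ i = beta_s CARD('d) t lam"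
    if t: "t < CARD('d)" "x \<in> orbit t" for t
  proof -
    obtain \<pi> where \<pi>: "\<pi> \<in> perms" "x = orbit_pt t \<pi>" using t(2) by (auto simp: orbit_def)
    then show "\<forall>i. beta_s CARD('d) t lam \<le> a_of x $ i"
      using t(1) by (simp add: a_of_orbit_pt a_vec_ge_beta[OF lam_gt_1])
    obtain j :: 'd where "a_vec t lam $ j = beta_s CARD('d) t lam" using a_vec_eq_beta[OF t(1)] by blast
    then have "a_of x $ \<pi> j = beta_s CARD('d) t lam"
      using \<pi> t(1) by (simp add: a_of_orbit_pt permutes_inverses(2))
    then show "\<exists>i. a_of x $ i = beta_s CARD('d) t lam" ..
  qed
  have "beta_s CARD('d) s lam = beta_s CARD('d) r lam"
    using min[OF assms(1,3)] min[OF assms(2,4)] by (metis order_antisym)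
  then show ?thesis using lam_gt_1 by (intro beta_s_inj) auto
qed

lemma measure_rho_s_orbit:
  assumes "s < CARD('d)" "r < CARD('d)"
  shows "measure (rho_s H s lam) (orbit r) = (if s = r then 1 else 0)"
proof (cases "s = r")
  case False
  then have "indicator (orbit r) (orbit_pt s \<pi>) = (0::real)" if "\<pi> \<in> perms" for \<pi>
    using orbit_disjoint[OF assms] orbit_pt_in_orbit[OF that] by (auto simp: indicator_def)
  then show ?thesis using False by (simp add: measure_rho_s orbit_in_sets)
qed (simp add: measure_rho_s_orbit_self)

lemma sum_indicator_Pperm_orbit:
  assumes "y \<in> orbit s" "A \<in> sets borel"
  shows "(\<Sum>\<pi>\<in>perms. indicator A (Pperm H \<pi> *v y)) = real (card perms) * measure (rho_s H s lam) A"
proof -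
  obtain \<sigma> where \<sigma>: "\<sigma> permutes UNIV" "y = orbit_pt s \<sigma>" using assms(1) by (auto simp: orbit_def)
  have "(\<Sum>\<pi>\<in>perms. indicator A (Pperm H \<pi> *v y)) = (\<Sum>\<pi>\<in>perms. indicator A (orbit_pt s (\<pi> \<circ> \<sigma>)) :: real)"
    using \<sigma> by (intro sum.cong refl) (simp add: orbit_pt_def Pperm_mult_Pperm)
  also have "\<dots> = (\<Sum>\<pi>\<in>perms. indicator A (orbit_pt s \<pi>))"
    using sum_permutations_compose_right[OF \<sigma>(1), of "\<lambda>\<pi>. indicator A (orbit_pt s \<pi>) :: real"] by simp
  finally show ?thesis
    using measure_rho_s[OF assms(2), of s] finite_perms perms_nonempty by simp
qed

text \<open>Average the identities \<open>measure \<rho> A = measure (P\<^sub>\<pi>\<^sub>#\<rho>) A\<close> over all permutations \<open>\<pi>\<close>.\<close>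
lemma exchangeable_measure_eq_integral:
  assumes "anchored H \<rho>" "exchangeable H \<rho>" "A \<in> sets borel"
  shows "measure \<rho> A = (\<integral>x. (\<Sum>\<pi>\<in>perms. indicator A (Pperm H \<pi> *v x)) / real (card perms) \<partial>\<rho>)"
proof -
  have sets: "sets \<rho> = sets borel" and prob: "prob_space \<rho>" using assms(1) by (simp_all add: anchored_def)
  interpret prob_space \<rho> by (rule prob)
  have meas: "(\<lambda>x. Pperm H \<pi> *v x) \<in> \<rho> \<rightarrow>\<^sub>M borel" for \<pi>
    by (subst measurable_cong_sets[OF sets refl]) (rule borel_measurable_matrix_vector_mult)
  have int: "integrable \<rho> (\<lambda>x. indicator A (Pperm H \<pi> *v x) :: real)" for \<pi>
    using measurable_compose[OF meas borel_measurable_indicator[OF assms(3)]]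
    by (intro integrable_const_bound[where B = 1]) (simp_all add: indicator_def)
  have "measure \<rho> A = (\<integral>x. indicator A (Pperm H \<pi> *v x) \<partial>\<rho>)" if "\<pi> \<in> perms" for \<pi>
  proof -
    have "measure \<rho> A = measure (distr \<rho> borel (\<lambda>x. Pperm H \<pi> *v x)) A"
      using assms(2) that by (simp add: exchangeable_def)
    also have "\<dots> = measure \<rho> ((\<lambda>x. Pperm H \<pi> *v x) -` A \<inter> space \<rho>)"
      by (rule measure_distr[OF meas assms(3)])
    also have "\<dots> = (\<integral>x. indicator A (Pperm H \<pi> *v x) \<partial>\<rho>)"
      using measurable_sets[OF meas assms(3)] by (simp add: indicator_vimage[symmetric])
    finally show ?thesis .
  qed
  then have "(\<Sum>\<pi>\<in>perms. \<integral>x. indicator A (Pperm H \<pi> *v x) \<partial>\<rho>) = (\<Sum>\<pi>\<in>perms. measure \<rho> A)"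
    by (intro sum.cong) simp_all
  then have "real (card perms) * measure \<rho> A = (\<Sum>\<pi>\<in>perms. \<integral>x. indicator A (Pperm H \<pi> *v x) \<partial>\<rho>)"
    by simp
  also have "\<dots> = (\<integral>x. (\<Sum>\<pi>\<in>perms. indicator A (Pperm H \<pi> *v x)) \<partial>\<rho>)"
    using int by (simp add: Bochner_Integration.integral_sum)
  finally show ?thesis using finite_perms perms_nonempty by (simp add: field_simps)
qed

lemma sum_indicator_orbit:
  fixes f :: "nat \<Rightarrow> real"
  assumes "finite S" "S \<subseteq> {..<CARD('d)}" "s \<in> S" "x \<in> orbit s"
  shows "(\<Sum>r\<in>S. f r * indicator (orbit r) x) = f s"
proof -
  have "f r * indicator (orbit r) x = (if r = s then f r else 0)" if "r \<in> S" for r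
    using orbit_disjoint[of r s x] assms that by (auto simp: indicator_def)
  then have "(\<Sum>r\<in>S. f r * indicator (orbit r) x) = (\<Sum>r\<in>S. if r = s then f r else 0)"
    by (rule sum.cong[OF refl])
  also have "\<dots> = f s" using assms(1,3) by (simp add: sum.delta)
  finally show ?thesis .
qed

lemma exchangeable_orbit_mixture:
  assumes "anchored H \<rho>" "exchangeable H \<rho>" "S \<subseteq> {..<CARD('d)}"
    and carried: "AE x in \<rho>. x \<in> (\<Union>s\<in>S. orbit s)" and A: "A \<in> sets borel"
  shows "measure \<rho> A = (\<Sum>s\<in>S. measure \<rho> (orbit s) * measure (rho_s H s lam) A)"
proof -
  have sets: "sets \<rho> = sets borel" and prob: "prob_space \<rho>" using assms(1) by (simp_all add: anchored_def)
  interpret prob_space \<rho> by (rule prob)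
  have "finite S" using assms(3) finite_subset by blast
  have "AE x in \<rho>. (\<Sum>\<pi>\<in>perms. indicator A (Pperm H \<pi> *v x)) / real (card perms)
      = (\<Sum>s\<in>S. measure (rho_s H s lam) A * indicator (orbit s) x)"
    using carried
  proof eventually_elim
    case (elim x)
    then obtain s where s: "s \<in> S" "x \<in> orbit s" by blast
    then show ?case
      using sum_indicator_orbit[OF \<open>finite S\<close> assms(3) s, of "\<lambda>r. measure (rho_s H r lam) A"]
        sum_indicator_Pperm_orbit[OF s(2) A] finite_perms perms_nonempty
      by simp
  qed
  moreover have "(\<lambda>x. (\<Sum>\<pi>\<in>perms. indicator A (Pperm H \<pi> *v x)) / real (card perms)) \<in> borel_measurable \<rho>"
    unfolding measurable_cong_sets[OF sets refl]
    using measurable_compose[OF borel_measurable_matrix_vector_mult borel_measurable_indicator[OF A]]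
    by (intro borel_measurable_divide borel_measurable_sum borel_measurable_const) auto
  moreover have "(\<lambda>x. \<Sum>s\<in>S. measure (rho_s H s lam) A * indicator (orbit s) x) \<in> borel_measurable \<rho>"
    unfolding measurable_cong_sets[OF sets refl] using orbit_in_sets by measurable
  ultimately have "measure \<rho> A = (\<integral>x. (\<Sum>s\<in>S. measure (rho_s H s lam) A * indicator (orbit s) x) \<partial>\<rho>)"
    unfolding exchangeable_measure_eq_integral[OF assms(1,2) A] by (intro integral_cong_AE)
  also have "\<dots> = (\<Sum>s\<in>S. \<integral>x. measure (rho_s H s lam) A * indicator (orbit s) x \<partial>\<rho>)"
    using orbit_in_sets sets
    by (intro Bochner_Integration.integral_sum integrable_mult_right integrable_real_indicator)
      (simp_all add: less_top[symmetric])
  also have "\<dots> = (\<Sum>s\<in>S. measure \<rho> (orbit s) * measure (rho_s H s lam) A)"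
    using orbit_in_sets sets by (simp add: mult.commute)
  finally show ?thesis .
qed

lemma measure_rho_s_optimal_orbits:
  assumes "s \<in> Sstar CARD('d) lam"
  shows "measure (rho_s H s lam) (\<Union>r\<in>Sstar CARD('d) lam. orbit r) = 1"
proof -
  interpret prob_space "rho_s H s lam" by (rule prob_space_rho_s)
  have "measure (rho_s H s lam) (orbit s) \<le> measure (rho_s H s lam) (\<Union>r\<in>Sstar CARD('d) lam. orbit r)"
    using assms orbit_in_sets by (intro finite_measure_mono) auto
  then show ?thesis using measure_rho_s_orbit_self[of s] prob_le_1 by (simp add: antisym)
qed

lemma optimal_exchangeable_mixture:
  assumes "anchored H \<rho>" "LDP H (ln lam) \<rho>" "exchangeable H \<rho>"
    and "trace (Sigma_mat \<rho>) = Tstar CARD('d) lam"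
  shows "\<forall>A\<in>sets borel. measure \<rho> A
      = (\<Sum>s\<in>Sstar CARD('d) lam. measure \<rho> (orbit s) * measure (rho_s H s lam) A)"
    and "(\<Sum>s\<in>Sstar CARD('d) lam. measure \<rho> (orbit s)) = 1"
proof -
  let ?U = "\<Union>s\<in>Sstar CARD('d) lam. orbit s"
  have carried: "AE x in \<rho>. x \<in> ?U" by (rule AE_optimal_orbits[OF assms(1,2,4)])
  have S: "Sstar CARD('d) lam \<subseteq> {..<CARD('d)}" using Sstar_range by auto
  show mix: "\<forall>A\<in>sets borel. measure \<rho> A
      = (\<Sum>s\<in>Sstar CARD('d) lam. measure \<rho> (orbit s) * measure (rho_s H s lam) A)"
    using exchangeable_orbit_mixture[OF assms(1,3) S carried] by blast
  have U: "?U \<in> sets borel" using orbit_in_sets finite_Sstar by blast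
  have "measure \<rho> ?U = 1"
    using assms(1) carried U prob_space.emeasure_eq_1_AE[of \<rho> ?U]
    by (simp add: anchored_def measure_def)
  then show "(\<Sum>s\<in>Sstar CARD('d) lam. measure \<rho> (orbit s)) = 1"
    using mix U by (simp add: measure_rho_s_optimal_orbits)
qed

lemma trace_mixture:
  assumes "anchored H \<rho>"
    and "\<forall>A\<in>sets borel. measure \<rho> A = (\<Sum>s\<in>Sstar CARD('d) lam. c s * measure (rho_s H s lam) A)"
    and "(\<Sum>s\<in>Sstar CARD('d) lam. c s) = 1"
  shows "trace (Sigma_mat \<rho>) = Tstar CARD('d) lam"
proof -
  let ?U = "\<Union>s\<in>Sstar CARD('d) lam. orbit s"
  have prob: "prob_space \<rho>" and sets: "sets \<rho> = sets borel" using assms(1) by (simp_all add: anchored_def)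
  have U: "?U \<in> sets borel" using orbit_in_sets finite_Sstar by blast
  then have "measure \<rho> ?U = 1" using assms(2,3) by (simp add: measure_rho_s_optimal_orbits)
  then have "AE x in \<rho>. x \<in> ?U"
    using prob_space.AE_prob_1[OF prob, of ?U] U sets by simp
  then have "AE x in \<rho>. (norm x)\<^sup>2 = Tstar CARD('d) lam"
  proof eventually_elim
    case (elim x)
    then obtain s \<pi> where s: "s \<in> Sstar CARD('d) lam" and "\<pi> \<in> perms" "x = orbit_pt s \<pi>"
      by (auto simp: orbit_def)
    moreover have "s \<le> CARD('d)" using Sstar_range[OF s] by simp
    moreover have "T CARD('d) lam s = Tstar CARD('d) lam" using s by (simp add: Sstar_def)
    ultimately show ?case using norm_orbit_pt by simp
  qed
  with prob sets show ?thesis by (rule trace_Sigma_mat_AE_const)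
qed

lemma optimal_iff_mixture:
  assumes "anchored H \<rho>" "LDP H (ln lam) \<rho>" "exchangeable H \<rho>"
  shows "trace (Sigma_mat \<rho>) = Tstar CARD('d) lam \<longleftrightarrow>
    (\<exists>c :: nat \<Rightarrow> real. (\<forall>s\<in>Sstar CARD('d) lam. c s \<ge> 0)
       \<and> (\<Sum>s\<in>Sstar CARD('d) lam. c s) = 1
       \<and> (\<forall>A\<in>sets borel. measure \<rho> A = (\<Sum>s\<in>Sstar CARD('d) lam. c s * measure (rho_s H s lam) A)))"
proof
  assume "trace (Sigma_mat \<rho>) = Tstar CARD('d) lam"
  with optimal_exchangeable_mixture[OF assms] show "\<exists>c. (\<forall>s\<in>Sstar CARD('d) lam. c s \<ge> 0)
       \<and> (\<Sum>s\<in>Sstar CARD('d) lam. c s) = 1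
       \<and> (\<forall>A\<in>sets borel. measure \<rho> A = (\<Sum>s\<in>Sstar CARD('d) lam. c s * measure (rho_s H s lam) A))"
    by (intro exI[of _ "\<lambda>s. measure \<rho> (orbit s)"]) simp
qed (use trace_mixture[OF assms(1)] in blast)

definition optimal_laws :: "(real^'m) measure set" where
  "optimal_laws = {\<mu>. anchored H \<mu> \<and> LDP H (ln lam) \<mu> \<and> exchangeable H \<mu>
      \<and> trace (Sigma_mat \<mu>) = Tstar CARD('d) lam}"

lemma rho_s_in_optimal_laws:
  assumes "s \<in> Sstar CARD('d) lam"
  shows "rho_s H s lam \<in> optimal_laws"
proof -
  have "s \<le> CARD('d)" "T CARD('d) lam s = Tstar CARD('d) lam"
    using assms Sstar_range[OF assms] by (simp_all add: Sstar_def)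
  then show ?thesis
    by (simp add: optimal_laws_def anchored_rho_s LDP_rho_s exchangeable_rho_s trace_rho_s)
qed

lemma optimal_law_eq_rho_s:
  assumes "\<mu> \<in> optimal_laws" "s \<in> Sstar CARD('d) lam" "measure \<mu> (orbit s) = 1"
  shows "\<mu> = rho_s H s lam"
proof -
  have anc: "anchored H \<mu>" using assms(1) by (simp add: optimal_laws_def)
  have mix: "\<forall>A\<in>sets borel. measure \<mu> A
      = (\<Sum>r\<in>Sstar CARD('d) lam. measure \<mu> (orbit r) * measure (rho_s H r lam) A)"
    and one: "(\<Sum>r\<in>Sstar CARD('d) lam. measure \<mu> (orbit r)) = 1"
    using assms(1) optimal_exchangeable_mixture[of \<mu>] by (simp_all add: optimal_laws_def)
  have "(\<Sum>r\<in>Sstar CARD('d) lam - {s}. measure \<mu> (orbit r)) = 0"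
    using one assms(2,3) finite_Sstar by (simp add: sum.remove)
  then have zero: "\<forall>r\<in>Sstar CARD('d) lam - {s}. measure \<mu> (orbit r) = 0"
    using finite_Sstar by (simp add: sum_nonneg_eq_0_iff)
  show ?thesis
  proof (rule measure_eqI_prob_space)
    show "prob_space \<mu>" "sets \<mu> = sets (rho_s H s lam)" using anc by (simp_all add: anchored_def)
    fix A assume "A \<in> sets \<mu>"
    then have "A \<in> sets borel" using anc by (simp add: anchored_def)
    then have "measure \<mu> A = measure \<mu> (orbit s) * measure (rho_s H s lam) A
        + (\<Sum>r\<in>Sstar CARD('d) lam - {s}. measure \<mu> (orbit r) * measure (rho_s H r lam) A)"
      using mix assms(2) finite_Sstar by (simp add: sum.remove)
    then show "measure \<mu> A = measure (rho_s H s lam) A" using zero assms(3) by simp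
  qed (rule prob_space_rho_s)
qed

lemma extreme_point_rho_s:
  assumes s: "s \<in> Sstar CARD('d) lam"
  shows "extreme_point optimal_laws (rho_s H s lam)"
  unfolding extreme_point_def
proof (intro conjI[OF rho_s_in_optimal_laws[OF s]] ballI allI impI)
  fix \<mu> \<nu> t
  assume \<mu>: "\<mu> \<in> optimal_laws" and \<nu>: "\<nu> \<in> optimal_laws"
    and t: "0 < t \<and> t < 1 \<and> is_mix (rho_s H s lam) t \<mu> \<nu>"
  have "s < CARD('d)" using Sstar_range[OF s] by simp
  then have "measure (rho_s H s lam) (orbit s) = t * measure \<mu> (orbit s) + (1 - t) * measure \<nu> (orbit s)"
    using t orbit_in_sets unfolding is_mix_def by blast
  then have "t * (1 - measure \<mu> (orbit s)) + (1 - t) * (1 - measure \<nu> (orbit s)) = 0"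
    using measure_rho_s_orbit_self[of s] by (simp add: algebra_simps)
  moreover have "measure \<mu> (orbit s) \<le> 1" "measure \<nu> (orbit s) \<le> 1"
    using \<mu> \<nu> by (simp_all add: optimal_laws_def anchored_def prob_space.prob_le_1)
  then have "0 \<le> t * (1 - measure \<mu> (orbit s))" "0 \<le> (1 - t) * (1 - measure \<nu> (orbit s))"
    using t by simp_all
  ultimately have "t * (1 - measure \<mu> (orbit s)) = 0" "(1 - t) * (1 - measure \<nu> (orbit s)) = 0"
    by linarith+
  then have "measure \<mu> (orbit s) = 1" "measure \<nu> (orbit s) = 1" using t by simp_all
  then show "\<mu> = rho_s H s lam \<and> \<nu> = rho_s H s lam"
    using optimal_law_eq_rho_s[OF \<mu> s] optimal_law_eq_rho_s[OF \<nu> s] by simp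
qed

text \<open>There are at most two optimal subset sizes, so a proper mixture of the \<open>rho_s\<close> splits
  off one of them.\<close>
lemma extreme_point_imp_rho_s:
  assumes ext: "extreme_point optimal_laws \<rho>"
  shows "\<rho> \<in> (\<lambda>s. rho_s H s lam) ` Sstar CARD('d) lam"
proof -
  have \<rho>: "\<rho> \<in> optimal_laws" using ext by (simp add: extreme_point_def)
  define c where "c s = measure \<rho> (orbit s)" for s
  have mix: "\<forall>A\<in>sets borel. measure \<rho> A = (\<Sum>r\<in>Sstar CARD('d) lam. c r * measure (rho_s H r lam) A)"
    and one: "(\<Sum>r\<in>Sstar CARD('d) lam. c r) = 1"
    using \<rho> optimal_exchangeable_mixture[of \<rho>] by (simp_all add: optimal_laws_def c_def)
  have "0 < (\<Sum>r\<in>Sstar CARD('d) lam. c r)" using one by simp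
  then obtain s where s: "s \<in> Sstar CARD('d) lam" "0 < c s" by (rule sum_pos_imp_ex_pos)
  show ?thesis
  proof (cases "c s = 1")
    case True
    then show ?thesis using optimal_law_eq_rho_s[OF \<rho> s(1)] s(1) by (simp add: c_def)
  next
    case False
    have split: "c s + (\<Sum>r\<in>Sstar CARD('d) lam - {s}. c r) = 1"
      using one s(1) finite_Sstar by (simp add: sum.remove)
    moreover have "0 \<le> (\<Sum>r\<in>Sstar CARD('d) lam - {s}. c r)" by (simp add: c_def sum_nonneg)
    ultimately have "c s < 1" using False by linarith
    then have "0 < (\<Sum>r\<in>Sstar CARD('d) lam - {s}. c r)" using split by linarith
    then obtain r where "r \<in> Sstar CARD('d) lam - {s}" "0 < c r" by (rule sum_pos_imp_ex_pos)
    then have r: "r \<in> Sstar CARD('d) lam" "r \<noteq> s" "0 < c r" by simp_all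
    have "Sstar CARD('d) lam \<subseteq> {nat \<lfloor>real CARD('d) / (lam + 1)\<rfloor>, nat \<lceil>real CARD('d) / (lam + 1)\<rceil>}"
      using Sstar_subset[OF card_ge_2 lam_gt_1] by blast
    then have "Sstar CARD('d) lam = {s, r}" using s(1) r(1,2) by blast
    then have "is_mix \<rho> (c s) (rho_s H s lam) (rho_s H r lam)"
      using mix one r(2) by (simp add: is_mix_def)
    moreover have "rho_s H s lam \<in> optimal_laws" "rho_s H r lam \<in> optimal_laws"
      using s(1) r(1) by (simp_all add: rho_s_in_optimal_laws)
    ultimately have "rho_s H s lam = \<rho>"
      using ext \<open>0 < c s\<close> \<open>c s < 1\<close> unfolding extreme_point_def by blast
    moreover have "measure (rho_s H s lam) (orbit r) = 0"
      using measure_rho_s_orbit Sstar_range s(1) r(1,2) by simp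
    ultimately show ?thesis using r(3) by (simp add: c_def)
  qed
qed

lemma extreme_points_optimal_laws:
  "{\<rho>. extreme_point optimal_laws \<rho>} = (\<lambda>s. rho_s H s lam) ` Sstar CARD('d) lam"
  using extreme_point_imp_rho_s extreme_point_rho_s by blast

end

theorem theorem9p3:
  fixes H :: "real^'m^'d::{finite,linorder}" and \<epsilon> :: real
  assumes d2: "CARD('d) \<ge> 2"
    and dim: "CARD('m) + 1 = CARD('d)"
    and orth: "transpose H ** H = mat 1"
    and span: "{H *v y | y. True} = {u. (\<Sum>i\<in>UNIV. u$i) = 0}"
    and eps: "\<epsilon> > 0"
  defines "lam \<equiv> exp \<epsilon>"
  shows "Sup {trace (Sigma_mat \<rho>) | \<rho>. anchored H \<rho> \<and> LDP H \<epsilon> \<rho>} = Tstar CARD('d) lam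
    \<and> (\<forall>s\<in>Sstar CARD('d) lam. anchored H (rho_s H s lam) \<and> LDP H \<epsilon> (rho_s H s lam)
            \<and> trace (Sigma_mat (rho_s H s lam)) = Tstar CARD('d) lam)
    \<and> (\<forall>\<rho>. anchored H \<rho> \<and> LDP H \<epsilon> \<rho> \<and> exchangeable H \<rho> \<longrightarrow>
           (trace (Sigma_mat \<rho>) = Tstar CARD('d) lam \<longleftrightarrow>
            (\<exists>c :: nat \<Rightarrow> real. (\<forall>s\<in>Sstar CARD('d) lam. c s \<ge> 0)
               \<and> (\<Sum>s\<in>Sstar CARD('d) lam. c s) = 1
               \<and> (\<forall>A\<in>sets borel. measure \<rho> A =
                    (\<Sum>s\<in>Sstar CARD('d) lam. c s * measure (rho_s H s lam) A)))))
    \<and> {\<rho>. extreme_point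
              {\<mu>. anchored H \<mu> \<and> LDP H \<epsilon> \<mu> \<and> exchangeable H \<mu>
                   \<and> trace (Sigma_mat \<mu>) = Tstar CARD('d) lam} \<rho>}
         = (\<lambda>s. rho_s H s lam) ` Sstar CARD('d) lam
    \<and> Sstar CARD('d) lam \<subseteq>
           {nat \<lfloor>real CARD('d) / (lam + 1)\<rfloor>, nat \<lceil>real CARD('d) / (lam + 1)\<rceil>} \<inter> {1..CARD('d) - 1}"
proof -
  have "1 < lam" using eps by (simp add: lam_def)
  then interpret subset_mechanism H lam
    using d2 orth span by unfold_locales
  have eps_eq: "\<epsilon> = ln lam" by (simp add: lam_def)
  obtain s0 where s0: "s0 \<in> Sstar CARD('d) lam" using Sstar_nonempty[OF d2] by blast
  have "Sup {trace (Sigma_mat \<rho>) | \<rho>. anchored H \<rho> \<and> LDP H \<epsilon> \<rho>} = Tstar CARD('d) lam"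
  proof (rule cSup_eq_maximum)
    show "Tstar CARD('d) lam \<in> {trace (Sigma_mat \<rho>) | \<rho>. anchored H \<rho> \<and> LDP H \<epsilon> \<rho>}"
      using rho_s_in_optimal_laws[OF s0] unfolding optimal_laws_def eps_eq
      by (intro CollectI exI[of _ "rho_s H s0 lam"]) simp
  qed (auto simp: eps_eq trace_le_Tstar)
  moreover have "\<forall>s\<in>Sstar CARD('d) lam. anchored H (rho_s H s lam) \<and> LDP H \<epsilon> (rho_s H s lam)
      \<and> trace (Sigma_mat (rho_s H s lam)) = Tstar CARD('d) lam"
    using rho_s_in_optimal_laws unfolding optimal_laws_def eps_eq by blast
  moreover note optimal_iff_mixture[unfolded eps_eq[symmetric]]
  moreover note extreme_points_optimal_laws[unfolded optimal_laws_def eps_eq[symmetric]]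
  ultimately show ?thesis using Sstar_subset[OF d2 \<open>1 < lam\<close>] by blast
qed

end
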